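(* Every ternary cubic form of Waring rank five (equivalently, whose zero locus is a smooth conic together with a line tangent to it) has an apolar star configuration $\mathbb{X}(4)$.
   Context: Let $S=\mathbb{C}[x_0,x_1,x_2]$ and $T=\mathbb{C}[y_0,y_1,y_2]$, where $T$ acts on $S$ by differentiation, $y_j=\partial/\partial x_j$. The Waring rank of a form $F$ of degree $d$ is the minimal $s$ such that $F=L_1^d+\dots+L_s^d$ with $L_i\in S_1$. For a form $F\in S$, $F^\perp=\{\partial\in T:\partial F=0\}$. A finite set of points $\mathbb{X}\subset\mathbb{P}^2=\mathbb{P}(S_1)$ with defining ideal $I(\mathbb{X})\subseteq T$ is apolar to $F$ if $I(\mathbb{X})\subseteq F^\perp$. A star configuration $\mathbb{X}(4)\subset\mathbb{P}^2$: take $4$ linear forms $l_1,\dots,l_4\in T_1$ such that any $3$ of them are linearly independent; $\mathbb{X}(4)$ is the set of $6$ pairwise intersection points of the lines $\{l_i=0\}$. *)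

theory Defs
  imports Complex_Main
begin

text \<open>Polynomials in three variables are encoded by their coefficient functions on
exponent triples (e0,e1,e2). An element F of S = C[x0,x1,x2] has coefficient F e at
the monomial x0^e0 x1^e1 x2^e2; an element G of T = C[y0,y1,y2] likewise.\<close>

type_synonym mono = "nat \<times> nat \<times> nat"
type_synonym vec3 = "complex \<times> complex \<times> complex"

fun mdeg :: "mono \<Rightarrow> nat" where
  "mdeg (a, b, c) = a + b + c"

fun mpow :: "vec3 \<Rightarrow> mono \<Rightarrow> complex" where
  "mpow (p0, p1, p2) (a, b, c) = p0 ^ a * p1 ^ b * p2 ^ c"

definition supp :: "(mono \<Rightarrow> complex) \<Rightarrow> mono set" where
  "supp P = {e. P e \<noteq> 0}"

definition is_poly :: "(mono \<Rightarrow> complex) \<Rightarrow> bool" where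
  "is_poly P \<longleftrightarrow> finite (supp P)"

definition is_form :: "nat \<Rightarrow> (mono \<Rightarrow> complex) \<Rightarrow> bool" where
  "is_form d P \<longleftrightarrow> (\<forall>e. P e \<noteq> 0 \<longrightarrow> mdeg e = d)"

text \<open>Coefficients of L^d for the linear form L = a0 x0 + a1 x1 + a2 x2.\<close>
fun lin_pow :: "vec3 \<Rightarrow> nat \<Rightarrow> mono \<Rightarrow> complex" where
  "lin_pow (a0, a1, a2) d (e0, e1, e2) =
     (if e0 + e1 + e2 = d
      then of_nat (fact d) / (of_nat (fact e0) * of_nat (fact e1) * of_nat (fact e2))
           * a0 ^ e0 * a1 ^ e1 * a2 ^ e2
      else 0)"

definition waring_rank :: "nat \<Rightarrow> (mono \<Rightarrow> complex) \<Rightarrow> nat" where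
  "waring_rank d F = (LEAST s. \<exists>L :: nat \<Rightarrow> vec3. F = (\<lambda>e. \<Sum>i<s. lin_pow (L i) d e))"

text \<open>Falling factorial factor: y_j^b applied to x_j^(b+c) gives (b+c)!/c! x_j^c.\<close>
fun dfac :: "mono \<Rightarrow> mono \<Rightarrow> complex" where
  "dfac (b0, b1, b2) (c0, c1, c2) =
     of_nat (fact (b0 + c0)) / of_nat (fact c0) *
     (of_nat (fact (b1 + c1)) / of_nat (fact c1)) *
     (of_nat (fact (b2 + c2)) / of_nat (fact c2))"

fun madd :: "mono \<Rightarrow> mono \<Rightarrow> mono" where
  "madd (b0, b1, b2) (c0, c1, c2) = (b0 + c0, b1 + c1, b2 + c2)"

text \<open>Action of G in T on F in S by differentiation (y_j = d/dx_j).\<close>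
definition diff_act :: "(mono \<Rightarrow> complex) \<Rightarrow> (mono \<Rightarrow> complex) \<Rightarrow> (mono \<Rightarrow> complex)" where
  "diff_act G F = (\<lambda>c. \<Sum>b\<in>supp G. G b * F (madd b c) * dfac b c)"

definition perp :: "(mono \<Rightarrow> complex) \<Rightarrow> (mono \<Rightarrow> complex) set" where
  "perp F = {G. is_poly G \<and> diff_act G F = (\<lambda>_. 0)}"

text \<open>Homogeneous ideal in T of a set of points of P^2 = P(S_1), the points being given
by (all) their nonzero representatives X \<subseteq> C^3: a polynomial lies in I(X) iff each
of its homogeneous components vanishes at every representative.\<close>
definition ideal_of :: "vec3 set \<Rightarrow> (mono \<Rightarrow> complex) set" where
  "ideal_of X = {G. is_poly G \<and>
      (\<forall>k. \<forall>p\<in>X. (\<Sum>b\<in>{b\<in>supp G. mdeg b = k}. G b * mpow p b) = 0)}"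

definition apolar :: "vec3 set \<Rightarrow> (mono \<Rightarrow> complex) \<Rightarrow> bool" where
  "apolar X F \<longleftrightarrow> ideal_of X \<subseteq> perp F"

fun lin_eval :: "vec3 \<Rightarrow> vec3 \<Rightarrow> complex" where
  "lin_eval (l0, l1, l2) (p0, p1, p2) = l0 * p0 + l1 * p1 + l2 * p2"

fun vsmult :: "complex \<Rightarrow> vec3 \<Rightarrow> vec3" where
  "vsmult a (x, y, z) = (a * x, a * y, a * z)"

fun vadd :: "vec3 \<Rightarrow> vec3 \<Rightarrow> vec3" where
  "vadd (x, y, z) (x', y', z') = (x + x', y + y', z + z')"

definition lin_indep3 :: "vec3 \<Rightarrow> vec3 \<Rightarrow> vec3 \<Rightarrow> bool" where
  "lin_indep3 u v w \<longleftrightarrow>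
     (\<forall>a b c. vadd (vsmult a u) (vadd (vsmult b v) (vsmult c w)) = (0, 0, 0)
        \<longrightarrow> a = 0 \<and> b = 0 \<and> c = 0)"

text \<open>Star configuration X(4) cut out by linear forms l 0, ..., l 3 (any three linearly
independent): the pairwise intersection points of the lines, given by their nonzero
representatives.\<close>
definition star_config :: "(nat \<Rightarrow> vec3) \<Rightarrow> vec3 set" where
  "star_config l = {p. p \<noteq> (0, 0, 0) \<and>
      (\<exists>i<4. \<exists>j<4. i \<noteq> j \<and> lin_eval (l i) p = 0 \<and> lin_eval (l j) p = 0)}"

definition star4_ok :: "(nat \<Rightarrow> vec3) \<Rightarrow> bool" where
  "star4_ok l \<longleftrightarrow> (\<forall>i<4. \<forall>j<4. \<forall>k<4. i \<noteq> j \<and> j \<noteq> k \<and> i \<noteq> k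
                       \<longrightarrow> lin_indep3 (l i) (l j) (l k))"

end

(* Write F = L0^3 + ... + L4^3 and let T be the symmetric trilinear form polarizing F. Since F is
   not a sum of four cubes, no two of the Li are proportional, and a case analysis on which triples
   of the Li are linearly dependent shows that the Hessian of F does not vanish identically. So
   there is a point e0 with T(e0,e0,e0) /= 0 and nonzero Hessian at e0. On the plane T(e0,e0,.) = 0
   the conic T(e0,.,.) is then nondegenerate, and from its two isotropic lines one builds a basis
   v0, v1, v2 with T(v0,v1,v2) = 0 and T(vi,vi,vj) + T(vi,vj,vj) = 0 for i < j. In the dual
   coordinates these four linear conditions say that F is a combination of the cubes of the six
   vertices of the star configuration cut out by v0, v1, v2, v0 + v1 + v2; and a combination of
   cubes of points of X is annihilated by every G vanishing on X. *)

theory Submission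
  imports Defs "HOL-Computational_Algebra.Polynomial"
begin

section \<open>Apolarity of sums of powers\<close>

lemma lin_pow_eq_0: "mdeg e \<noteq> d \<Longrightarrow> lin_pow a d e = 0"
  by (cases a; cases e) auto

lemma lin_pow_madd_dfac:
  "lin_pow p d (madd b (c0, c1, c2)) * dfac b (c0, c1, c2) =
     (if mdeg b + (c0 + c1 + c2) = d
      then of_nat (fact d) / (of_nat (fact c0) * of_nat (fact c1) * of_nat (fact c2))
           * mpow p (c0, c1, c2) * mpow p b
      else 0)"
proof -
  obtain p0 p1 p2 b0 b1 b2 where "p = (p0, p1, p2)" "b = (b0, b1, b2)"
    by (metis prod.exhaust)
  then show ?thesis
    by (simp add: power_add field_simps)
qed

lemma diff_act_sum:
  "diff_act G (\<lambda>e. \<Sum>j\<in>J. d j * P j e) = (\<lambda>c. \<Sum>j\<in>J. d j * diff_act G (P j) c)"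
  unfolding diff_act_def
  by (rule ext) (simp add: sum_distrib_left sum_distrib_right sum.swap[of _ "supp G"] mult_ac)

lemma diff_act_lin_pow_eq_0:
  assumes G: "G \<in> ideal_of X" and p: "p \<in> X"
  shows "diff_act G (lin_pow p d) = (\<lambda>_. 0)"
proof
  fix c
  obtain c0 c1 c2 :: nat where c: "c = (c0, c1, c2)"
    by (cases c rule: prod_cases3)
  define K where "K = of_nat (fact d) / (of_nat (fact c0) * of_nat (fact c1) * of_nat (fact c2)) * mpow p c"
  have fin: "finite (supp G)"
    using G unfolding ideal_of_def is_poly_def by auto
  have "diff_act G (lin_pow p d) c
      = (\<Sum>b\<in>supp G. if mdeg b = d - mdeg c \<and> mdeg c \<le> d then K * (G b * mpow p b) else 0)"
    unfolding diff_act_def c by (intro sum.cong refl) (auto simp: mult.assoc lin_pow_madd_dfac K_def c)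
  also have "\<dots> = (if mdeg c \<le> d then K * (\<Sum>b\<in>{b\<in>supp G. mdeg b = d - mdeg c}. G b * mpow p b) else 0)"
    using fin by (auto simp: sum.inter_filter sum_distrib_left intro!: sum.cong)
  also have "\<dots> = 0"
    using G p unfolding ideal_of_def by auto
  finally show "diff_act G (lin_pow p d) c = 0" .
qed

lemma apolar_of_sum_powers:
  assumes "\<forall>j\<in>J. B j \<in> X" and "F = (\<lambda>e. \<Sum>j\<in>J. c j * lin_pow (B j) d e)"
  shows "apolar X F"
  unfolding apolar_def
proof
  fix G assume G: "G \<in> ideal_of X"
  have "diff_act G F = (\<lambda>e. \<Sum>j\<in>J. c j * diff_act G (lin_pow (B j) d) e)"
    unfolding assms(2) by (rule diff_act_sum)
  also have "\<dots> = (\<lambda>_. 0)"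
    using diff_act_lin_pow_eq_0[OF G] assms(1) by simp
  finally show "G \<in> perp F"
    using G unfolding perp_def ideal_of_def by auto
qed

section \<open>Cubic forms as functions\<close>

lemma mdeg_eq_3_iff:
  "{e. mdeg e = 3} = {(3,0,0),(0,3,0),(0,0,3),(2,1,0),(2,0,1),(1,2,0),(0,2,1),(1,0,2),(0,1,2),(1,1,1)}"
proof (intro set_eqI iffI)
  fix e :: mono
  assume "e \<in> {e. mdeg e = 3}"
  moreover obtain a b c where e: "e = (a, b, c)" by (cases e)
  ultimately have abc: "a + b + c = 3" by simp
  then have "a \<in> {0, 1, 2, 3}" "b \<in> {0, 1, 2, 3}" by auto
  then show "e \<in> {(3,0,0),(0,3,0),(0,0,3),(2,1,0),(2,0,1),(1,2,0),(0,2,1),(1,0,2),(0,1,2),(1,1,1)}"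
    using abc unfolding e by (elim insertE emptyE; simp)+
qed auto

definition eval_cubic :: "(mono \<Rightarrow> complex) \<Rightarrow> vec3 \<Rightarrow> complex" where
  "eval_cubic h u = (\<Sum>e\<in>{e. mdeg e = 3}. h e * mpow u e)"

lemma eval_cubic_expand:
  "eval_cubic h (x, y, z) = h (3,0,0) * x^3 + h (0,3,0) * y^3 + h (0,0,3) * z^3
     + h (2,1,0) * x^2 * y + h (2,0,1) * x^2 * z + h (1,2,0) * x * y^2 + h (0,2,1) * y^2 * z
     + h (1,0,2) * x * z^2 + h (0,1,2) * y * z^2 + h (1,1,1) * x * y * z"
  unfolding eval_cubic_def mdeg_eq_3_iff by (simp add: mult.assoc add.assoc)

lemma eval_cubic_lin_pow: "eval_cubic (lin_pow a 3) u = lin_eval a u ^ 3"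
proof -
  obtain a0 a1 a2 x y z where a: "a = (a0, a1, a2)" and u: "u = (x, y, z)"
    by (metis prod.exhaust)
  show ?thesis
    unfolding a u by (simp add: eval_cubic_expand fact_numeral) algebra
qed

lemma eval_cubic_sum:
  "eval_cubic (\<lambda>e. \<Sum>j\<in>J. c j * P j e) u = (\<Sum>j\<in>J. c j * eval_cubic (P j) u)"
  unfolding eval_cubic_def
  by (simp add: sum_distrib_right sum_distrib_left sum.swap[of _ "{e. mdeg e = 3}"] mult.assoc)

lemma eval_cubic_sum_cubes:
  "eval_cubic (\<lambda>e. \<Sum>j\<in>J. c j * lin_pow (B j) 3 e) u = (\<Sum>j\<in>J. c j * lin_eval (B j) u ^ 3)"
  by (simp add: eval_cubic_sum eval_cubic_lin_pow)

lemma eval_cubic_diff: "eval_cubic (\<lambda>e. g e - h e) u = eval_cubic g u - eval_cubic h u"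
  unfolding eval_cubic_def by (simp add: left_diff_distrib sum_subtractf)

lemma coeff_eq_0_if_eval_cubic_eq_0:
  assumes zero: "\<And>u. eval_cubic h u = 0" and e: "mdeg e = 3"
  shows "h e = 0"
proof -
  have v: "eval_cubic h (x, y, z) = 0" for x y z
    using zero .
  have h300: "h (3,0,0) = 0" and h030: "h (0,3,0) = 0" and h003: "h (0,0,3) = 0"
    using v[of 1 0 0] v[of 0 1 0] v[of 0 0 1] by (simp_all add: eval_cubic_expand)
  have "h (2,1,0) + h (1,2,0) = 0" "h (1,2,0) - h (2,1,0) = 0"
    using v[of 1 1 0] v[of 1 "-1" 0] h300 h030 by (simp_all add: eval_cubic_expand)
  then have h210: "h (2,1,0) = 0" and h120: "h (1,2,0) = 0"
    by (simp_all add: algebra_simps)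
  have "h (2,0,1) + h (1,0,2) = 0" "h (1,0,2) - h (2,0,1) = 0"
    using v[of 1 0 1] v[of 1 0 "-1"] h300 h003 by (simp_all add: eval_cubic_expand)
  then have h201: "h (2,0,1) = 0" and h102: "h (1,0,2) = 0"
    by (simp_all add: algebra_simps)
  have "h (0,2,1) + h (0,1,2) = 0" "h (0,1,2) - h (0,2,1) = 0"
    using v[of 0 1 1] v[of 0 1 "-1"] h030 h003 by (simp_all add: eval_cubic_expand)
  then have h021: "h (0,2,1) = 0" and h012: "h (0,1,2) = 0"
    by (simp_all add: algebra_simps)
  have h111: "h (1,1,1) = 0"
    using v[of 1 1 1] h300 h030 h003 h210 h120 h201 h102 h021 h012
    by (simp add: eval_cubic_expand)
  from e have "e \<in> {e. mdeg e = 3}" by simp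
  then show ?thesis
    unfolding mdeg_eq_3_iff using h300 h030 h003 h210 h120 h201 h102 h021 h012 h111 by auto
qed

lemma cubic_form_eq_sum_cubes:
  assumes form: "is_form 3 F"
    and eq: "\<And>u. eval_cubic F u = (\<Sum>j\<in>J. c j * lin_eval (B j) u ^ 3)"
  shows "F = (\<lambda>e. \<Sum>j\<in>J. c j * lin_pow (B j) 3 e)"
proof
  fix e
  show "F e = (\<Sum>j\<in>J. c j * lin_pow (B j) 3 e)"
  proof (cases "mdeg e = 3")
    case True
    have "eval_cubic (\<lambda>e. F e - (\<Sum>j\<in>J. c j * lin_pow (B j) 3 e)) u = 0" for u
      by (simp add: eval_cubic_diff eval_cubic_sum_cubes eq)
    from coeff_eq_0_if_eval_cubic_eq_0[OF this True] show ?thesis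
      by simp
  next
    case False
    then have "F e = 0"
      using form unfolding is_form_def by blast
    with False show ?thesis
      by (simp add: lin_pow_eq_0)
  qed
qed

lemma is_form_sum_lin_pow: "is_form d (\<lambda>e. \<Sum>i<n. lin_pow (L i) d e)"
proof -
  have "(\<Sum>i<n. lin_pow (L i) d e) = 0" if "mdeg e \<noteq> d" for e
    using that by (simp add: lin_pow_eq_0)
  then show ?thesis
    unfolding is_form_def by blast
qed

section \<open>Sums of cubes and the Waring rank\<close>

lemma ex_complex_root:
  assumes "0 < n"
  shows "\<exists>z::complex. z ^ n = c"
proof -
  from assms have "rcis (root n (cmod c)) (Arg c / n) ^ n = c"
    by (simp add: DeMoivre2 rcis_cmod_Arg)
  then show ?thesis by blast
qed

lemma lin_pow_vsmult: "lin_pow (vsmult z p) d e = z ^ d * lin_pow p d e"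
proof -
  obtain p0 p1 p2 e0 e1 e2 where "p = (p0, p1, p2)" "e = (e0, e1, e2)"
    by (metis prod.exhaust)
  then show ?thesis
    by (auto simp: power_mult_distrib power_add[symmetric] add.assoc)
qed

definition sum_of_cubes :: "(mono \<Rightarrow> complex) \<Rightarrow> nat \<Rightarrow> bool" where
  "sum_of_cubes F s \<longleftrightarrow> (\<exists>L. F = (\<lambda>e. \<Sum>i<s. lin_pow (L i) 3 e))"

lemma eval_cubic_sum_of_cubes:
  "F = (\<lambda>e. \<Sum>i<s. lin_pow (L i) 3 e) \<Longrightarrow> eval_cubic F u = (\<Sum>i<s. lin_eval (L i) u ^ 3)"
  using eval_cubic_sum_cubes[of "\<lambda>_. 1"] by simp

lemma sum_of_cubes_if_eval_cubic:
  assumes form: "is_form 3 F" and J: "finite J" "card J \<le> s"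
    and eq: "\<And>u. eval_cubic F u = (\<Sum>j\<in>J. c j * lin_eval (B j) u ^ 3)"
  shows "sum_of_cubes F s"
proof -
  obtain h where h: "bij_betw h {..<card J} J"
    using ex_bij_betw_nat_finite[OF J(1)] atLeast0LessThan by metis
  have "\<forall>j. \<exists>w. w ^ 3 = c j"
    using ex_complex_root[of 3] by simp
  then obtain z where z: "z j ^ 3 = c j" for j
    by metis
  define L where "L i = (if i < card J then vsmult (z (h i)) (B (h i)) else (0, 0, 0))" for i
  have "F = (\<lambda>e. \<Sum>j\<in>J. c j * lin_pow (B j) 3 e)"
    using cubic_form_eq_sum_cubes[OF form eq] .
  also have "\<dots> = (\<lambda>e. \<Sum>i<card J. c (h i) * lin_pow (B (h i)) 3 e)"
    by (subst sum.reindex_bij_betw[OF h, symmetric]) simp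
  also have "\<dots> = (\<lambda>e. \<Sum>i<card J. lin_pow (L i) 3 e)"
    by (simp add: L_def lin_pow_vsmult z)
  also have "\<dots> = (\<lambda>e. \<Sum>i<s. lin_pow (L i) 3 e)"
  proof
    fix e
    have "lin_pow (L i) 3 e = 0" if "i \<ge> card J" for i
      using that by (cases e) (auto simp: L_def)
    then show "(\<Sum>i<card J. lin_pow (L i) 3 e) = (\<Sum>i<s. lin_pow (L i) 3 e)"
      using J(2) by (intro sum.mono_neutral_left) auto
  qed
  finally show ?thesis
    unfolding sum_of_cubes_def by blast
qed

text \<open>The cubes of \<open>x, y, z, x \<plusminus> y, x \<plusminus> z, y \<plusminus> z, x + y + z\<close> span the ternary cubics:
  \<open>(x + y)\<^sup>3 \<plusminus> (x - y)\<^sup>3\<close> isolate \<open>x\<^sup>2 y\<close> and \<open>x y\<^sup>2\<close> modulo pure cubes, and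
  \<open>(x + y + z)\<^sup>3\<close> supplies \<open>x y z\<close>.\<close>

lemma cubic_form_sum_of_10_cubes:
  assumes "is_form 3 F"
  shows "sum_of_cubes F 10"
proof (rule sum_of_cubes_if_eval_cubic[OF assms])
  define a210 a120 a201 a102 a021 a012 where
    "a210 = F (2,1,0) - F (1,1,1) / 2" and "a120 = F (1,2,0) - F (1,1,1) / 2"
    and "a201 = F (2,0,1) - F (1,1,1) / 2" and "a102 = F (1,0,2) - F (1,1,1) / 2"
    and "a021 = F (0,2,1) - F (1,1,1) / 2" and "a012 = F (0,1,2) - F (1,1,1) / 2"
  define c where "c = [F (3,0,0) - F (1,1,1) / 6 - a120 / 3 - a102 / 3,
    F (0,3,0) - F (1,1,1) / 6 - a210 / 3 - a012 / 3,
    F (0,0,3) - F (1,1,1) / 6 - a201 / 3 - a021 / 3,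
    (a210 + a120) / 6, (a120 - a210) / 6, (a201 + a102) / 6, (a102 - a201) / 6,
    (a021 + a012) / 6, (a012 - a021) / 6, F (1,1,1) / 6]"
  define B :: "vec3 list" where "B = [(1,0,0), (0,1,0), (0,0,1), (1,1,0), (1,-1,0),
    (1,0,1), (1,0,-1), (0,1,1), (0,1,-1), (1,1,1)]"
  fix u :: vec3
  obtain x y z where u: "u = (x, y, z)" by (cases u)
  show "eval_cubic F u = (\<Sum>j<10. (c ! j) * lin_eval (B ! j) u ^ 3)"
    unfolding u eval_cubic_expand
    by (simp add: c_def B_def a210_def a120_def a201_def a102_def a021_def a012_def numeral_eq_Suc)
      (simp add: field_simps; algebra)
qed simp_all

lemma waring_rank_eq_Least: "waring_rank 3 F = (LEAST s. sum_of_cubes F s)"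
  unfolding waring_rank_def sum_of_cubes_def ..

lemma sum_of_cubes_waring_rank:
  assumes "is_form 3 F"
  shows "sum_of_cubes F (waring_rank 3 F)"
  using cubic_form_sum_of_10_cubes[OF assms] unfolding waring_rank_eq_Least by (rule LeastI)

lemma not_sum_of_cubes_below_waring_rank: "s < waring_rank 3 F \<Longrightarrow> \<not> sum_of_cubes F s"
  unfolding waring_rank_eq_Least by (rule not_less_Least)

section \<open>Linear algebra in \<open>\<complex>\<^sup>3\<close>\<close>

fun cross :: "vec3 \<Rightarrow> vec3 \<Rightarrow> vec3" where
  "cross (a0, a1, a2) (b0, b1, b2) = (a1 * b2 - a2 * b1, a2 * b0 - a0 * b2, a0 * b1 - a1 * b0)"

definition det3 :: "vec3 \<Rightarrow> vec3 \<Rightarrow> vec3 \<Rightarrow> complex" where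
  "det3 a b c = lin_eval a (cross b c)"

lemma det3_swap: "det3 b a c = - det3 a b c"
  by (cases a rule: prod_cases3; cases b rule: prod_cases3; cases c rule: prod_cases3)
    (simp add: det3_def algebra_simps)

lemma det3_cyclic: "det3 b c a = det3 a b c"
  by (cases a rule: prod_cases3; cases b rule: prod_cases3; cases c rule: prod_cases3)
    (simp add: det3_def algebra_simps)

lemma det3_swap23: "det3 a c b = - det3 a b c"
  by (metis det3_cyclic det3_swap)

lemma lin_eval_commute: "lin_eval a b = lin_eval b a"
  by (cases a rule: prod_cases3; cases b rule: prod_cases3) (simp add: mult.commute)

lemma lin_eval_vadd: "lin_eval (vadd a b) u = lin_eval a u + lin_eval b u"
  by (cases a rule: prod_cases3; cases b rule: prod_cases3; cases u rule: prod_cases3)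
    (simp add: algebra_simps)

lemma lin_eval_vsmult: "lin_eval (vsmult c a) u = c * lin_eval a u"
  by (cases a rule: prod_cases3; cases u rule: prod_cases3) (simp add: algebra_simps)

lemma lin_eval_vadd_right: "lin_eval u (vadd a b) = lin_eval u a + lin_eval u b"
  by (metis lin_eval_commute lin_eval_vadd)

lemma lin_eval_vsmult_right: "lin_eval u (vsmult c a) = c * lin_eval u a"
  by (metis lin_eval_commute lin_eval_vsmult)

lemma lin_eval_zero_right [simp]: "lin_eval u (0, 0, 0) = 0"
  by (cases u rule: prod_cases3) simp

lemma lin_eval_cross:
  "lin_eval a (cross a b) = 0" "lin_eval b (cross a b) = 0" "lin_eval c (cross a b) = det3 a b c"
  by (cases a rule: prod_cases3; cases b rule: prod_cases3; cases c rule: prod_cases3;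
      simp add: det3_def algebra_simps)+

lemma lin_indep3_if_det3:
  assumes "det3 u v w \<noteq> 0"
  shows "lin_indep3 u v w"
  unfolding lin_indep3_def
proof (intro allI impI)
  fix a b c
  assume h: "vadd (vsmult a u) (vadd (vsmult b v) (vsmult c w)) = (0, 0, 0)"
  obtain u0 u1 u2 v0 v1 v2 w0 w1 w2 where uvw: "u = (u0, u1, u2)" "v = (v0, v1, v2)" "w = (w0, w1, w2)"
    by (metis prod.exhaust)
  have "a * u0 + b * v0 + c * w0 = 0" "a * u1 + b * v1 + c * w1 = 0" "a * u2 + b * v2 + c * w2 = 0"
    using h unfolding uvw by (simp_all add: add.assoc)
  then have "a * det3 u v w = 0" "b * det3 u v w = 0" "c * det3 u v w = 0"
    unfolding uvw det3_def by (simp_all, algebra+)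
  with assms show "a = 0 \<and> b = 0 \<and> c = 0"
    by simp
qed

definition lincomb3 :: "vec3 \<Rightarrow> vec3 \<Rightarrow> vec3 \<Rightarrow> complex \<Rightarrow> complex \<Rightarrow> complex \<Rightarrow> vec3" where
  "lincomb3 v0 v1 v2 a0 a1 a2 = vadd (vsmult a0 v0) (vadd (vsmult a1 v1) (vsmult a2 v2))"

lemma lin_eval_lincomb3:
  "lin_eval p (lincomb3 v0 v1 v2 a0 a1 a2) = a0 * lin_eval p v0 + a1 * lin_eval p v1 + a2 * lin_eval p v2"
  by (simp add: lincomb3_def lin_eval_vadd_right lin_eval_vsmult_right)

lemma lincomb3_1_0_0: "lincomb3 v0 v1 v2 1 0 0 = v0"
  by (cases v0 rule: prod_cases3; cases v1 rule: prod_cases3; cases v2 rule: prod_cases3)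
    (simp add: lincomb3_def)

lemma det3_lincomb3:
  "det3 (lincomb3 v0 v1 v2 a0 a1 a2) (lincomb3 v0 v1 v2 b0 b1 b2) (lincomb3 v0 v1 v2 c0 c1 c2) =
     (a0 * (b1 * c2 - b2 * c1) - a1 * (b0 * c2 - b2 * c0) + a2 * (b0 * c1 - b1 * c0)) * det3 v0 v1 v2"
proof -
  obtain x0 x1 x2 y0 y1 y2 z0 z1 z2 where v: "v0 = (x0, x1, x2)" "v1 = (y0, y1, y2)" "v2 = (z0, z1, z2)"
    by (metis prod.exhaust)
  show ?thesis
    unfolding v lincomb3_def det3_def by simp algebra
qed

text \<open>\<open>dual v0 v1 v2\<close>, \<open>dual v1 v2 v0\<close>, \<open>dual v2 v0 v1\<close> is the basis dual to
  \<open>v0, v1, v2\<close> with respect to \<open>lin_eval\<close>.\<close>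

definition dual :: "vec3 \<Rightarrow> vec3 \<Rightarrow> vec3 \<Rightarrow> vec3" where
  "dual v0 v1 v2 = vsmult (1 / det3 v0 v1 v2) (cross v1 v2)"

lemma lin_eval_dual:
  assumes "det3 v0 v1 v2 \<noteq> 0"
  shows "lin_eval v0 (dual v0 v1 v2) = 1" "lin_eval v1 (dual v0 v1 v2) = 0"
    "lin_eval v2 (dual v0 v1 v2) = 0"
proof -
  have "lin_eval v0 (cross v1 v2) = det3 v0 v1 v2"
    by (simp add: det3_def)
  with assms show "lin_eval v0 (dual v0 v1 v2) = 1" "lin_eval v1 (dual v0 v1 v2) = 0"
    "lin_eval v2 (dual v0 v1 v2) = 0"
    by (simp_all add: dual_def lin_eval_vsmult_right lin_eval_cross(1,2))
qed

lemma cramer3: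
  "vsmult (det3 v0 v1 v2) u = lincomb3 v0 v1 v2
     (lin_eval u (cross v1 v2)) (lin_eval u (cross v2 v0)) (lin_eval u (cross v0 v1))"
proof -
  obtain u0 u1 u2 x0 x1 x2 y0 y1 y2 z0 z1 z2 where
    v: "u = (u0, u1, u2)" "v0 = (x0, x1, x2)" "v1 = (y0, y1, y2)" "v2 = (z0, z1, z2)"
    by (metis prod.exhaust)
  show ?thesis
    unfolding v lincomb3_def det3_def by simp (intro conjI; algebra)
qed

lemma lincomb3_scaled:
  "lincomb3 v0 v1 v2 (c * a0) (c * a1) (c * a2) = vsmult c (lincomb3 v0 v1 v2 a0 a1 a2)"
  by (cases v0 rule: prod_cases3; cases v1 rule: prod_cases3; cases v2 rule: prod_cases3)
    (simp add: lincomb3_def distrib_left mult.assoc)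

lemma lincomb3_dual_coords:
  assumes "det3 v0 v1 v2 \<noteq> 0"
  shows "u = lincomb3 v0 v1 v2 (lin_eval (dual v0 v1 v2) u) (lin_eval (dual v1 v2 v0) u)
    (lin_eval (dual v2 v0 v1) u)"
proof -
  define c where "c = 1 / det3 v0 v1 v2"
  have "det3 v1 v2 v0 = det3 v0 v1 v2" "det3 v2 v0 v1 = det3 v0 v1 v2"
    using det3_cyclic by metis+
  then have coords: "lin_eval (dual v0 v1 v2) u = c * lin_eval u (cross v1 v2)"
    "lin_eval (dual v1 v2 v0) u = c * lin_eval u (cross v2 v0)"
    "lin_eval (dual v2 v0 v1) u = c * lin_eval u (cross v0 v1)"
    unfolding dual_def c_def lin_eval_vsmult by (simp_all add: lin_eval_commute)
  have "lincomb3 v0 v1 v2 (lin_eval (dual v0 v1 v2) u) (lin_eval (dual v1 v2 v0) u)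
      (lin_eval (dual v2 v0 v1) u) = vsmult c (vsmult (det3 v0 v1 v2) u)"
    unfolding coords lincomb3_scaled cramer3 ..
  with assms show ?thesis
    by (cases u rule: prod_cases3) (simp add: c_def)
qed

lemma ex_lin_eval_eq:
  assumes "det3 a b c \<noteq> 0"
  shows "\<exists>e. lin_eval a e = s \<and> lin_eval b e = t \<and> lin_eval c e = r"
proof -
  have "det3 b c a \<noteq> 0" "det3 c a b \<noteq> 0"
    using assms det3_cyclic by metis+
  with assms show ?thesis
    by (intro exI[of _ "lincomb3 (dual a b c) (dual b c a) (dual c a b) s t r"])
      (simp add: lin_eval_lincomb3 lin_eval_dual)
qed

definition unit_vec :: "nat \<Rightarrow> vec3" where
  "unit_vec i = (if i = 0 then (1, 0, 0) else if i = 1 then (0, 1, 0) else (0, 0, 1))"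

lemma ex_lin_eval_unit_vec_nonzero:
  assumes "v \<noteq> (0, 0, 0)"
  shows "\<exists>i. lin_eval v (unit_vec i) \<noteq> 0"
proof -
  obtain v0 v1 v2 where v: "v = (v0, v1, v2)" by (cases v)
  have "lin_eval v (unit_vec 0) = v0" "lin_eval v (unit_vec 1) = v1" "lin_eval v (unit_vec 2) = v2"
    by (simp_all add: v unit_vec_def)
  with assms v show ?thesis
    by (metis (full_types))
qed

lemma lin_eval_comb2_if_det3_eq_0:
  assumes ab: "cross a b \<noteq> (0, 0, 0)" and x: "det3 a b x = 0"
  shows "\<exists>\<alpha> \<beta>. \<forall>u. lin_eval x u = \<alpha> * lin_eval a u + \<beta> * lin_eval b u"
proof -
  obtain w where "lin_eval (cross a b) w \<noteq> 0"
    using ex_lin_eval_unit_vec_nonzero[OF ab] by blast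
  then have w: "det3 w a b \<noteq> 0"
    by (simp add: det3_def lin_eval_commute)
  have "lin_eval (cross a b) x = det3 a b x"
    unfolding lin_eval_commute[of "cross a b"] by (rule lin_eval_cross(3))
  then have "lin_eval (dual w a b) x = 0"
    using x by (simp add: dual_def lin_eval_vsmult)
  then have x_eq: "x = lincomb3 w a b 0 (lin_eval (dual a b w) x) (lin_eval (dual b w a) x)"
    using lincomb3_dual_coords[OF w, of x] by simp
  have "lin_eval x u = lin_eval (dual a b w) x * lin_eval a u + lin_eval (dual b w a) x * lin_eval b u"
    for u
    by (subst x_eq) (simp add: lin_eval_commute[of _ u] lin_eval_lincomb3)
  then show ?thesis
    by blast
qed

lemma proportional_if_cross_eq_0:
  assumes "cross x y = (0, 0, 0)"
  shows "(\<exists>c. x = vsmult c y) \<or> (\<exists>c. y = vsmult c x)"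
proof -
  obtain x0 x1 x2 y0 y1 y2 where xy: "x = (x0, x1, x2)" "y = (y0, y1, y2)"
    by (metis prod.exhaust)
  have e: "x1 * y2 = x2 * y1" "x2 * y0 = x0 * y2" "x0 * y1 = x1 * y0"
    using assms unfolding xy by auto
  consider "y0 \<noteq> 0" | "y1 \<noteq> 0" | "y2 \<noteq> 0" | "y = (0, 0, 0)"
    using xy by blast
  then show ?thesis
  proof cases
    case 1
    then have "x = vsmult (x0 / y0) y"
      unfolding xy using e by (simp add: field_simps; metis mult.commute)
    then show ?thesis by blast
  next
    case 2
    then have "x = vsmult (x1 / y1) y"
      unfolding xy using e by (simp add: field_simps; metis mult.commute)
    then show ?thesis by blast
  next
    case 3
    then have "x = vsmult (x2 / y2) y"
      unfolding xy using e by (simp add: field_simps; metis mult.commute)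
    then show ?thesis by blast
  next
    case 4
    then have "y = vsmult 0 x"
      unfolding xy by simp
    then show ?thesis by blast
  qed
qed

lemma ex_kernel_basis:
  assumes "lin_eval g e0 \<noteq> 0"
  shows "\<exists>c1 c2. lin_eval g c1 = 0 \<and> lin_eval g c2 = 0 \<and> det3 e0 c1 c2 \<noteq> 0"
proof -
  obtain g0 g1 g2 x0 x1 x2 where g: "g = (g0, g1, g2)" and e0: "e0 = (x0, x1, x2)"
    by (metis prod.exhaust)
  have ge0: "lin_eval g e0 = g0 * x0 + g1 * x1 + g2 * x2"
    unfolding g e0 by simp
  consider "g2 \<noteq> 0" | "g1 \<noteq> 0" | "g0 \<noteq> 0"
    using assms unfolding g e0 by fastforce
  then show ?thesis
  proof cases
    case 1
    have "det3 e0 (g2, 0, - g0) (0, g2, - g1) = g2 * lin_eval g e0"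
      unfolding ge0 unfolding e0 det3_def by simp algebra
    with 1 assms show ?thesis
      unfolding g by (intro exI[of _ "(g2, 0, - g0)"] exI[of _ "(0, g2, - g1)"]) (simp add: algebra_simps)
  next
    case 2
    have "det3 e0 (g1, - g0, 0) (0, g2, - g1) = g1 * lin_eval g e0"
      unfolding ge0 unfolding e0 det3_def by simp algebra
    with 2 assms show ?thesis
      unfolding g by (intro exI[of _ "(g1, - g0, 0)"] exI[of _ "(0, g2, - g1)"]) (simp add: algebra_simps)
  next
    case 3
    have "det3 e0 (- g1, g0, 0) (- g2, 0, g0) = g0 * lin_eval g e0"
      unfolding ge0 unfolding e0 det3_def by simp algebra
    with 3 assms show ?thesis
      unfolding g by (intro exI[of _ "(- g1, g0, 0)"] exI[of _ "(- g2, 0, g0)"]) (simp add: algebra_simps)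
  qed
qed

section \<open>The polar form and the Hessian\<close>

text \<open>\<open>polar L n\<close> is the symmetric trilinear form polarizing the cubic
  \<open>x \<mapsto> \<Sum>i<n. (L i \<cdot> x)\<^sup>3\<close>; \<open>hessian L n e\<close>, defined below, is its Hessian
  determinant at \<open>e\<close> up to the factor 6.\<close>

definition polar :: "(nat \<Rightarrow> vec3) \<Rightarrow> nat \<Rightarrow> vec3 \<Rightarrow> vec3 \<Rightarrow> vec3 \<Rightarrow> complex" where
  "polar L n a b c = (\<Sum>i<n. lin_eval (L i) a * lin_eval (L i) b * lin_eval (L i) c)"

lemma polar_swap: "polar L n b a c = polar L n a b c" "polar L n a c b = polar L n a b c"
  unfolding polar_def by (simp_all add: mult_ac)

lemma eval_cubic_eq_polar:
  "F = (\<lambda>e. \<Sum>i<n. lin_pow (L i) 3 e) \<Longrightarrow> eval_cubic F u = polar L n u u u"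
  by (simp add: eval_cubic_sum_of_cubes polar_def power3_eq_cube)

lemma polar_zero: "polar L n (0, 0, 0) b c = 0"
  by (simp add: polar_def)

lemma polar_lincomb3_left:
  "polar L n (lincomb3 v0 v1 v2 a0 a1 a2) b c =
     a0 * polar L n v0 b c + a1 * polar L n v1 b c + a2 * polar L n v2 b c"
  by (simp add: polar_def lin_eval_lincomb3 lin_eval_commute[of "L _"] sum_distrib_left
      sum.distrib algebra_simps)

lemma polar_unit_vec_expand:
  "polar L n (x0, x1, x2) b c =
     x0 * polar L n (unit_vec 0) b c + x1 * polar L n (unit_vec 1) b c + x2 * polar L n (unit_vec 2) b c"
  using polar_lincomb3_left[of L n "unit_vec 0" "unit_vec 1" "unit_vec 2" x0 x1 x2]
  by (simp add: lincomb3_def unit_vec_def)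

lemma polar_lincomb3:
  "polar L n (lincomb3 v0 v1 v2 a0 a1 a2) (lincomb3 v0 v1 v2 b0 b1 b2) (lincomb3 v0 v1 v2 c0 c1 c2) =
    (a0*b0*c0) * polar L n v0 v0 v0 + (a1*b1*c1) * polar L n v1 v1 v1 + (a2*b2*c2) * polar L n v2 v2 v2
  + (a0*b0*c1 + a0*b1*c0 + a1*b0*c0) * polar L n v0 v0 v1
  + (a0*b1*c1 + a1*b0*c1 + a1*b1*c0) * polar L n v0 v1 v1
  + (a0*b0*c2 + a0*b2*c0 + a2*b0*c0) * polar L n v0 v0 v2
  + (a0*b2*c2 + a2*b0*c2 + a2*b2*c0) * polar L n v0 v2 v2
  + (a1*b1*c2 + a1*b2*c1 + a2*b1*c1) * polar L n v1 v1 v2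
  + (a1*b2*c2 + a2*b1*c2 + a2*b2*c1) * polar L n v1 v2 v2
  + (a0*b1*c2 + a0*b2*c1 + a1*b0*c2 + a1*b2*c0 + a2*b0*c1 + a2*b1*c0) * polar L n v0 v1 v2"
proof -
  have expand: "(a0*x + a1*y + a2*z) * (b0*x + b1*y + b2*z) * (c0*x + c1*y + c2*z) =
    (a0*b0*c0) * (x*x*x) + (a1*b1*c1) * (y*y*y) + (a2*b2*c2) * (z*z*z)
  + (a0*b0*c1 + a0*b1*c0 + a1*b0*c0) * (x*x*y) + (a0*b1*c1 + a1*b0*c1 + a1*b1*c0) * (x*y*y)
  + (a0*b0*c2 + a0*b2*c0 + a2*b0*c0) * (x*x*z) + (a0*b2*c2 + a2*b0*c2 + a2*b2*c0) * (x*z*z)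
  + (a1*b1*c2 + a1*b2*c1 + a2*b1*c1) * (y*y*z) + (a1*b2*c2 + a2*b1*c2 + a2*b2*c1) * (y*z*z)
  + (a0*b1*c2 + a0*b2*c1 + a1*b0*c2 + a1*b2*c0 + a2*b0*c1 + a2*b1*c0) * (x*y*z)" for x y z :: complex
    by algebra
  show ?thesis
    unfolding polar_def lin_eval_lincomb3 expand
    by (simp only: sum.distrib sum_distrib_left[symmetric])
qed

definition mat_det3 :: "(nat \<Rightarrow> nat \<Rightarrow> 'a::comm_ring) \<Rightarrow> 'a" where
  "mat_det3 m = m 0 0 * (m 1 1 * m 2 2 - m 1 2 * m 2 1) - m 0 1 * (m 1 0 * m 2 2 - m 1 2 * m 2 0)
     + m 0 2 * (m 1 0 * m 2 1 - m 1 1 * m 2 0)"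

fun bilin :: "(nat \<Rightarrow> nat \<Rightarrow> complex) \<Rightarrow> vec3 \<Rightarrow> vec3 \<Rightarrow> complex" where
  "bilin m (x0, x1, x2) (y0, y1, y2) =
     x0*y0*m 0 0 + x0*y1*m 0 1 + x0*y2*m 0 2 + x1*y0*m 1 0 + x1*y1*m 1 1 + x1*y2*m 1 2
   + x2*y0*m 2 0 + x2*y1*m 2 1 + x2*y2*m 2 2"

lemma polar_eq_bilin: "polar L n e x y = bilin (\<lambda>i j. polar L n e (unit_vec i) (unit_vec j)) x y"
proof -
  obtain x0 x1 x2 y0 y1 y2 where xy: "x = (x0, x1, x2)" "y = (y0, y1, y2)"
    by (metis prod.exhaust)
  have l: "lin_eval l x = x0 * lin_eval l (unit_vec 0) + x1 * lin_eval l (unit_vec 1) + x2 * lin_eval l (unit_vec 2)"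
    "lin_eval l y = y0 * lin_eval l (unit_vec 0) + y1 * lin_eval l (unit_vec 1) + y2 * lin_eval l (unit_vec 2)"
    for l
    by (cases l rule: prod_cases3; simp add: xy unit_vec_def algebra_simps)+
  show ?thesis
    unfolding xy bilin.simps polar_def l[unfolded xy]
    by (simp add: sum.distrib sum_distrib_left algebra_simps)
qed

lemma mat_det3_congruence:
  assumes sym: "m 1 0 = m 0 1" "m 2 0 = m 0 2" "m 2 1 = m 1 2"
  shows "mat_det3 (\<lambda>i j. bilin m (P i) (P j)) = det3 (P 0) (P 1) (P 2) ^ 2 * mat_det3 m"
proof -
  obtain a0 a1 a2 b0 b1 b2 c0 c1 c2 where P: "P 0 = (a0, a1, a2)" "P 1 = (b0, b1, b2)" "P 2 = (c0, c1, c2)"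
    by (metis prod.exhaust)
  show ?thesis
    unfolding mat_det3_def P det3_def bilin.simps sym by simp algebra
qed

definition hessian :: "(nat \<Rightarrow> vec3) \<Rightarrow> nat \<Rightarrow> vec3 \<Rightarrow> complex" where
  "hessian L n e = mat_det3 (\<lambda>i j. polar L n e (unit_vec i) (unit_vec j))"

lemma ex_common_nonroot:
  fixes p q :: "complex poly"
  assumes "p \<noteq> 0" "q \<noteq> 0"
  shows "\<exists>t. poly p t \<noteq> 0 \<and> poly q t \<noteq> 0"
proof -
  from assms have "p * q \<noteq> 0"
    by simp
  then obtain t where "poly (p * q) t \<noteq> 0"
    using poly_all_0_iff_0 by blast
  then show ?thesis
    by auto
qed

lemma poly_mat_det3: "poly (mat_det3 m) t = mat_det3 (\<lambda>i j. poly (m i j) t)"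
  by (simp add: mat_det3_def)

lemma ex_polar_nonzero_if_hessian_nonzero:
  assumes H: "hessian L n e \<noteq> 0"
  shows "\<exists>w. polar L n e e w \<noteq> 0"
proof (rule ccontr)
  assume "\<nexists>w. polar L n e e w \<noteq> 0"
  then have zero: "polar L n e e (unit_vec j) = 0" for j
    by blast
  define M where "M i j = polar L n (unit_vec i) e (unit_vec j)" for i j
  obtain x0 x1 x2 where e: "e = (x0, x1, x2)"
    by (cases e rule: prod_cases3)
  have "polar L n e e (unit_vec j) = x0 * M 0 j + x1 * M 1 j + x2 * M 2 j" for j
    unfolding M_def e by (rule polar_unit_vec_expand)
  then have lin: "x0 * M 0 j + x1 * M 1 j + x2 * M 2 j = 0" for j
    using zero by simp
  have "mat_det3 M * x0 = 0" "mat_det3 M * x1 = 0" "mat_det3 M * x2 = 0"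
    using lin[of 0] lin[of 1] lin[of 2] unfolding mat_det3_def by algebra+
  moreover have "mat_det3 M = hessian L n e"
    unfolding M_def hessian_def by (simp add: polar_swap)
  ultimately have "e = (0, 0, 0)"
    using H by (simp add: e)
  with H show False
    by (simp add: hessian_def polar_zero mat_det3_def)
qed

lemma ex_cube_and_hessian_nonzero:
  assumes H: "hessian L n e \<noteq> 0"
  shows "\<exists>e0. polar L n e0 e0 e0 \<noteq> 0 \<and> hessian L n e0 \<noteq> 0"
proof -
  obtain w where w: "polar L n e e w \<noteq> 0"
    using ex_polar_nonzero_if_hessian_nonzero[OF H] by blast
  define p where "p = [:polar L n e e e, 3 * polar L n e e w, 3 * polar L n e w w, polar L n w w w:]"
  define h where "h = mat_det3 (\<lambda>i j. [:polar L n e (unit_vec i) (unit_vec j),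
    polar L n w (unit_vec i) (unit_vec j):])"
  have p_eq: "poly p t = polar L n (lincomb3 e w w 1 t 0) (lincomb3 e w w 1 t 0) (lincomb3 e w w 1 t 0)"
    for t
    unfolding p_def polar_lincomb3
    by (simp add: polar_swap algebra_simps power2_eq_square power3_eq_cube)
  have h_eq: "poly h t = hessian L n (lincomb3 e w w 1 t 0)" for t
    unfolding h_def hessian_def poly_mat_det3 polar_lincomb3_left by simp
  have "p \<noteq> 0"
  proof
    assume "p = 0"
    then have "coeff p 1 = 0" by simp
    with w show False by (simp add: p_def)
  qed
  moreover have "h \<noteq> 0"
    using H h_eq[of 0] by (auto simp: lincomb3_1_0_0)
  ultimately obtain t where "poly p t \<noteq> 0" "poly h t \<noteq> 0"
    using ex_common_nonroot by blast
  then show ?thesis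
    unfolding p_eq h_eq by blast
qed

section \<open>Star frames\<close>

definition star_lines :: "vec3 \<Rightarrow> vec3 \<Rightarrow> vec3 \<Rightarrow> nat \<Rightarrow> vec3" where
  "star_lines v0 v1 v2 i = [v0, v1, v2, vadd v0 (vadd v1 v2)] ! i"

lemma star4_ok_star_lines:
  assumes "det3 v0 v1 v2 \<noteq> 0"
  shows "star4_ok (star_lines v0 v1 v2)"
proof -
  define s where "s = vadd v0 (vadd v1 v2)"
  have base: "det3 v0 v1 v2 \<noteq> 0" "det3 v0 v1 s \<noteq> 0" "det3 v0 v2 s \<noteq> 0" "det3 v1 v2 s \<noteq> 0"
    using assms unfolding s_def det3_def
    by (cases v0 rule: prod_cases3; cases v1 rule: prod_cases3; cases v2 rule: prod_cases3;
        simp add: algebra_simps)+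
  have perms: "det3 b a c \<noteq> 0" "det3 a c b \<noteq> 0" "det3 b c a \<noteq> 0" "det3 c a b \<noteq> 0"
    "det3 c b a \<noteq> 0" if "det3 a b c \<noteq> 0" for a b c
    using that det3_swap det3_cyclic det3_swap23 by (metis neg_equal_0_iff_equal)+
  have "det3 (star_lines v0 v1 v2 i) (star_lines v0 v1 v2 j) (star_lines v0 v1 v2 k) \<noteq> 0"
    if "i < 4" "j < 4" "k < 4" "i \<noteq> j" "j \<noteq> k" "i \<noteq> k" for i j k
    using that base perms[OF base(1)] perms[OF base(2)] perms[OF base(3)] perms[OF base(4)]
    by (auto simp: star_lines_def s_def[symmetric] less_Suc_eq numeral_eq_Suc)
  then show ?thesis
    unfolding star4_ok_def by (blast intro: lin_indep3_if_det3)
qed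

text \<open>In the coordinates dual to \<open>v0, v1, v2\<close> these four linear conditions on the cubic say
  that it is a combination of the cubes of the six vertices of the star configuration of the lines
  \<open>v0, v1, v2, v0 + v1 + v2\<close>.\<close>

definition star_frame :: "(nat \<Rightarrow> vec3) \<Rightarrow> nat \<Rightarrow> vec3 \<Rightarrow> vec3 \<Rightarrow> vec3 \<Rightarrow> bool" where
  "star_frame L n v0 v1 v2 \<longleftrightarrow> det3 v0 v1 v2 \<noteq> 0 \<and> polar L n v0 v1 v2 = 0
     \<and> polar L n v0 v0 v1 + polar L n v0 v1 v1 = 0 \<and> polar L n v0 v0 v2 + polar L n v0 v2 v2 = 0
     \<and> polar L n v1 v1 v2 + polar L n v1 v2 v2 = 0"

lemma ternary_cubic_in_star_span:
  fixes t000 t111 t222 t001 t011 t002 t022 t112 t122 t012 b0 b1 b2 :: complex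
  assumes "t012 = 0" "t001 + t011 = 0" "t002 + t022 = 0" "t112 + t122 = 0"
  shows "b0^3 * t000 + b1^3 * t111 + b2^3 * t222 + 3 * (b0^2 * b1) * t001 + 3 * (b0 * b1^2) * t011
    + 3 * (b0^2 * b2) * t002 + 3 * (b0 * b2^2) * t022 + 3 * (b1^2 * b2) * t112
    + 3 * (b1 * b2^2) * t122 + 6 * (b0 * b1 * b2) * t012
   = (t000 + t001 + t002) * b0^3 + (t111 - t001 + t112) * b1^3 + (t222 - t002 - t112) * b2^3
    - t001 * (b0 - b1)^3 - t002 * (b0 - b2)^3 - t112 * (b1 - b2)^3"
proof -
  have "t011 = - t001" "t022 = - t002" "t122 = - t112"
    using assms by (simp_all add: eq_neg_iff_add_eq_0 add.commute)
  then show ?thesis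
    unfolding assms(1) by algebra
qed

lemma polar_cube_lincomb3:
  "polar L n (lincomb3 v0 v1 v2 b0 b1 b2) (lincomb3 v0 v1 v2 b0 b1 b2) (lincomb3 v0 v1 v2 b0 b1 b2) =
     b0^3 * polar L n v0 v0 v0 + b1^3 * polar L n v1 v1 v1 + b2^3 * polar L n v2 v2 v2
   + 3 * (b0^2 * b1) * polar L n v0 v0 v1 + 3 * (b0 * b1^2) * polar L n v0 v1 v1
   + 3 * (b0^2 * b2) * polar L n v0 v0 v2 + 3 * (b0 * b2^2) * polar L n v0 v2 v2
   + 3 * (b1^2 * b2) * polar L n v1 v1 v2 + 3 * (b1 * b2^2) * polar L n v1 v2 v2
   + 6 * (b0 * b1 * b2) * polar L n v0 v1 v2"
  unfolding polar_lincomb3 by (simp add: power2_eq_square power3_eq_cube algebra_simps)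

lemma star_config_memI:
  assumes "lin_eval w p \<noteq> 0" "i < 4" "j < 4" "i \<noteq> j" "lin_eval (l i) p = 0" "lin_eval (l j) p = 0"
  shows "p \<in> star_config l"
  using assms unfolding star_config_def by force

definition star_vertices :: "vec3 \<Rightarrow> vec3 \<Rightarrow> vec3 \<Rightarrow> vec3 list" where
  "star_vertices v0 v1 v2 = (let d0 = dual v0 v1 v2; d1 = dual v1 v2 v0; d2 = dual v2 v0 v1 in
     [d0, d1, d2, vadd d0 (vsmult (-1) d1), vadd d0 (vsmult (-1) d2), vadd d1 (vsmult (-1) d2)])"

lemma star_vertices_in_star_config:
  assumes "det3 v0 v1 v2 \<noteq> 0" and "j < 6"
  shows "star_vertices v0 v1 v2 ! j \<in> star_config (star_lines v0 v1 v2)"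
proof -
  define d0 d1 d2 where "d0 = dual v0 v1 v2" and "d1 = dual v1 v2 v0" and "d2 = dual v2 v0 v1"
  have "det3 v1 v2 v0 \<noteq> 0" "det3 v2 v0 v1 \<noteq> 0"
    using assms(1) det3_cyclic by metis+
  then have "lin_eval v0 d0 = 1" "lin_eval v1 d0 = 0" "lin_eval v2 d0 = 0"
    "lin_eval v1 d1 = 1" "lin_eval v2 d1 = 0" "lin_eval v0 d1 = 0"
    "lin_eval v2 d2 = 1" "lin_eval v0 d2 = 0" "lin_eval v1 d2 = 0"
    unfolding d0_def d1_def d2_def using lin_eval_dual assms(1) by simp_all
  note simps = this star_vertices_def d0_def[symmetric] d1_def[symmetric] d2_def[symmetric]
    star_lines_def lin_eval_vadd lin_eval_vadd_right lin_eval_vsmult_right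
  from \<open>j < 6\<close> consider "j = 0" | "j = 1" | "j = 2" | "j = 3" | "j = 4" | "j = 5"
    by linarith
  then show ?thesis
  proof cases
    case 1
    show ?thesis
      unfolding \<open>j = 0\<close> by (rule star_config_memI[of v0 _ 1 2]) (simp_all add: simps)
  next
    case 2
    show ?thesis
      unfolding \<open>j = 1\<close> by (rule star_config_memI[of v1 _ 0 2]) (simp_all add: simps)
  next
    case 3
    show ?thesis
      unfolding \<open>j = 2\<close> by (rule star_config_memI[of v2 _ 0 1]) (simp_all add: simps)
  next
    case 4
    show ?thesis
      unfolding \<open>j = 3\<close> by (rule star_config_memI[of v0 _ 2 3]) (simp_all add: simps)
  next
    case 5
    show ?thesis
      unfolding \<open>j = 4\<close> by (rule star_config_memI[of v0 _ 1 3]) (simp_all add: simps)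
  next
    case 6
    show ?thesis
      unfolding \<open>j = 5\<close> by (rule star_config_memI[of v1 _ 0 3]) (simp_all add: simps)
  qed
qed

lemma eval_cubic_in_star_span:
  assumes F: "F = (\<lambda>e. \<Sum>i<n. lin_pow (L i) 3 e)" and fr: "star_frame L n v0 v1 v2"
  shows "\<exists>c. \<forall>u. eval_cubic F u = (\<Sum>j<6. c ! j * lin_eval (star_vertices v0 v1 v2 ! j) u ^ 3)"
proof (intro exI allI)
  fix u
  define d0 d1 d2 where "d0 = dual v0 v1 v2" and "d1 = dual v1 v2 v0" and "d2 = dual v2 v0 v1"
  define b0 b1 b2 where "b0 = lin_eval d0 u" and "b1 = lin_eval d1 u" and "b2 = lin_eval d2 u"
  have u: "u = lincomb3 v0 v1 v2 b0 b1 b2"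
    using fr lincomb3_dual_coords unfolding star_frame_def b0_def b1_def b2_def d0_def d1_def d2_def
    by blast
  have "eval_cubic F u = polar L n u u u"
    using F by (rule eval_cubic_eq_polar)
  also have "\<dots> = b0^3 * polar L n v0 v0 v0 + b1^3 * polar L n v1 v1 v1 + b2^3 * polar L n v2 v2 v2
    + 3 * (b0^2 * b1) * polar L n v0 v0 v1 + 3 * (b0 * b1^2) * polar L n v0 v1 v1
    + 3 * (b0^2 * b2) * polar L n v0 v0 v2 + 3 * (b0 * b2^2) * polar L n v0 v2 v2
    + 3 * (b1^2 * b2) * polar L n v1 v1 v2 + 3 * (b1 * b2^2) * polar L n v1 v2 v2
    + 6 * (b0 * b1 * b2) * polar L n v0 v1 v2"
    by (subst (1 2 3) u) (rule polar_cube_lincomb3)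
  also have "\<dots> = (polar L n v0 v0 v0 + polar L n v0 v0 v1 + polar L n v0 v0 v2) * b0^3
    + (polar L n v1 v1 v1 - polar L n v0 v0 v1 + polar L n v1 v1 v2) * b1^3
    + (polar L n v2 v2 v2 - polar L n v0 v0 v2 - polar L n v1 v1 v2) * b2^3
    - polar L n v0 v0 v1 * (b0 - b1)^3 - polar L n v0 v0 v2 * (b0 - b2)^3
    - polar L n v1 v1 v2 * (b1 - b2)^3"
    using fr unfolding star_frame_def by (intro ternary_cubic_in_star_span) auto
  also have "\<dots> = (\<Sum>j<6. [polar L n v0 v0 v0 + polar L n v0 v0 v1 + polar L n v0 v0 v2,
      polar L n v1 v1 v1 - polar L n v0 v0 v1 + polar L n v1 v1 v2,
      polar L n v2 v2 v2 - polar L n v0 v0 v2 - polar L n v1 v1 v2,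
      - polar L n v0 v0 v1, - polar L n v0 v0 v2, - polar L n v1 v1 v2] ! j
    * lin_eval (star_vertices v0 v1 v2 ! j) u ^ 3)"
    by (simp add: star_vertices_def d0_def[symmetric] d1_def[symmetric] d2_def[symmetric]
        numeral_eq_Suc lin_eval_vadd lin_eval_vsmult b0_def b1_def b2_def)
  finally show "eval_cubic F u = \<dots>" .
qed

lemma apolar_star_config_if_star_frame:
  assumes F: "F = (\<lambda>e. \<Sum>i<n. lin_pow (L i) 3 e)" and fr: "star_frame L n v0 v1 v2"
  shows "apolar (star_config (star_lines v0 v1 v2)) F"
proof -
  obtain c where "\<And>u. eval_cubic F u = (\<Sum>j<6. c ! j * lin_eval (star_vertices v0 v1 v2 ! j) u ^ 3)"
    using eval_cubic_in_star_span[OF F fr] by blast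
  then have "F = (\<lambda>e. \<Sum>j<6. c ! j * lin_pow (star_vertices v0 v1 v2 ! j) 3 e)"
    using is_form_sum_lin_pow F by (intro cubic_form_eq_sum_cubes) auto
  moreover have "\<forall>j\<in>{..<6}. star_vertices v0 v1 v2 ! j \<in> star_config (star_lines v0 v1 v2)"
    using fr star_vertices_in_star_config unfolding star_frame_def by blast
  ultimately show ?thesis
    by (intro apolar_of_sum_powers)
qed

section \<open>Existence of a star frame\<close>

lemma ex_distinct_roots_quadratic:
  fixes a b c :: complex
  assumes a: "a \<noteq> 0" and disc: "b^2 - 4 * a * c \<noteq> 0"
  shows "\<exists>x y. x \<noteq> y \<and> a * (x + y) = - b \<and> a * (x * y) = c"
proof -
  define d where "d = csqrt (b^2 - 4 * a * c)"
  have d2: "d^2 = b^2 - 4 * a * c"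
    unfolding d_def by simp
  with disc have "d \<noteq> 0"
    by auto
  define x y where "x = (- b + d) / (2 * a)" and "y = (- b - d) / (2 * a)"
  have "x \<noteq> y"
    using \<open>d \<noteq> 0\<close> a unfolding x_def y_def by (auto simp: field_simps)
  moreover have "a * (x + y) = - b"
    using a unfolding x_def y_def by (simp add: field_simps)
  moreover have "a * (x * y) = (b^2 - d^2) / (4 * a)"
    using a unfolding x_def y_def by (simp add: field_simps power2_eq_square)
  then have "a * (x * y) = c"
    using a unfolding d2 by (simp add: field_simps)
  ultimately show ?thesis
    by blast
qed

text \<open>Take \<open>v0, v1\<close> in the plane of \<open>e0, e1\<close> and \<open>v2\<close> in that of \<open>e0, e2\<close>:
  the four conditions of a star frame then hold when \<open>s1, s2\<close> and \<open>r1, r2\<close> are the roots of two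
  quadratics and \<open>a (s1 - s2) = r2 - r1\<close>.\<close>

lemma star_frame_if_discriminants:
  fixes L :: "nat \<Rightarrow> vec3" and n :: nat and e0 e1 e2 :: vec3
  defines "t000 \<equiv> polar L n e0 e0 e0" and "t111 \<equiv> polar L n e1 e1 e1"
    and "t222 \<equiv> polar L n e2 e2 e2" and "t001 \<equiv> polar L n e0 e0 e1"
    and "t011 \<equiv> polar L n e0 e1 e1" and "t002 \<equiv> polar L n e0 e0 e2"
    and "t022 \<equiv> polar L n e0 e2 e2" and "t112 \<equiv> polar L n e1 e1 e2"
    and "t122 \<equiv> polar L n e1 e2 e2" and "t012 \<equiv> polar L n e0 e1 e2"
  assumes fr: "det3 e0 e1 e2 \<noteq> 0"
    and D: "t000 * t012 - t001 * t002 \<noteq> 0"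
    and disc1: "(t000 * t112 - t011 * t002)^2
      - 4 * (t000 * t012 - t001 * t002) * (t001 * t112 - t011 * t012) \<noteq> 0"
    and disc2: "(t000 * t122 - t022 * t001)^2
      - 4 * (t000 * t012 - t001 * t002) * (t002 * t122 - t022 * t012) \<noteq> 0"
  shows "\<exists>v0 v1 v2. star_frame L n v0 v1 v2"
proof -
  obtain s1 s2 where s: "s1 \<noteq> s2" "(t000 * t012 - t001 * t002) * (s1 + s2) = - (t000 * t112 - t011 * t002)"
    "(t000 * t012 - t001 * t002) * (s1 * s2) = t001 * t112 - t011 * t012"
    using ex_distinct_roots_quadratic[OF D disc1] by blast
  obtain r1 r2 where r: "r1 \<noteq> r2" "(t000 * t012 - t001 * t002) * (r1 + r2) = - (t000 * t122 - t022 * t001)"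
    "(t000 * t012 - t001 * t002) * (r1 * r2) = t002 * t122 - t022 * t012"
    using ex_distinct_roots_quadratic[OF D disc2] by blast
  define a where "a = (r2 - r1) / (s1 - s2)"
  have a: "a * (s1 - s2) = r2 - r1" "a \<noteq> 0"
    using s(1) r(1) by (simp_all add: a_def)
  define v0 v1 v2 where "v0 = lincomb3 e0 e1 e2 (a * s1) a 0"
    and "v1 = lincomb3 e0 e1 e2 (- a * s2) (- a) 0" and "v2 = lincomb3 e0 e1 e2 r1 0 1"
  note expand = polar_lincomb3[of L n e0 e1 e2, folded t000_def t111_def t222_def t001_def
      t011_def t002_def t022_def t112_def t122_def t012_def]
  have "det3 v0 v1 v2 = - (a * a) * (s1 - s2) * det3 e0 e1 e2"
    unfolding v0_def v1_def v2_def det3_lincomb3 by (simp add: algebra_simps)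
  then have "det3 v0 v1 v2 \<noteq> 0"
    using fr a(2) s(1) by simp
  moreover have "(t000 * t012 - t001 * t002) * polar L n v0 v1 v2 = 0"
    "(t000 * t012 - t001 * t002) * (polar L n v0 v0 v1 + polar L n v0 v1 v1) = 0"
    "(t000 * t012 - t001 * t002) * (polar L n v0 v0 v2 + polar L n v0 v2 v2) = 0"
    "(t000 * t012 - t001 * t002) * (polar L n v1 v1 v2 + polar L n v1 v2 v2) = 0"
    unfolding v0_def v1_def v2_def expand using s(2,3) r(2,3) a(1) by algebra+
  ultimately have "star_frame L n v0 v1 v2"
    using D unfolding star_frame_def by simp
  then show ?thesis
    by blast
qed

lemma ex_isotropic_pair:
  fixes p q r :: complex
  assumes "p * r - q^2 \<noteq> 0"
  shows "\<exists>a1 b1 a2 b2. a1^2 * p + 2 * a1 * b1 * q + b1^2 * r = 0 \<and> a2^2 * p + 2 * a2 * b2 * q + b2^2 * r = 0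
    \<and> a1 * a2 * p + (a1 * b2 + a2 * b1) * q + b1 * b2 * r \<noteq> 0 \<and> a1 * b2 - a2 * b1 \<noteq> 0"
proof (cases "p = 0")
  case True
  with assms have "q \<noteq> 0"
    by auto
  with True show ?thesis
    by (intro exI[of _ 1] exI[of _ 0] exI[of _ r] exI[of _ "- 2 * q"])
      (simp add: power2_eq_square algebra_simps)
next
  case False
  define \<sigma> where "\<sigma> = csqrt (q^2 - p * r)"
  have \<sigma>2: "\<sigma>^2 = q^2 - p * r"
    unfolding \<sigma>_def by simp
  with assms have "\<sigma> \<noteq> 0"
    by (auto simp: algebra_simps)
  moreover have "(- q + \<sigma>) * (- q - \<sigma>) * p + ((- q + \<sigma>) * p + (- q - \<sigma>) * p) * q + p * p * r
      = 2 * p * (p * r - q^2)"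
    "(- q + \<sigma>)^2 * p + 2 * (- q + \<sigma>) * p * q + p^2 * r = 0"
    "(- q - \<sigma>)^2 * p + 2 * (- q - \<sigma>) * p * q + p^2 * r = 0"
    using \<sigma>2 by algebra+
  moreover have "(- q + \<sigma>) * p - (- q - \<sigma>) * p = 2 * p * \<sigma>"
    by (simp add: algebra_simps)
  ultimately show ?thesis
    using False assms by (intro exI[of _ "- q + \<sigma>"] exI[of _ p] exI[of _ "- q - \<sigma>"] exI[of _ p]) simp
qed

lemma square_plus_cube_poly_nonzero:
  fixes f K a0 a1 a2 a3 :: complex
  assumes f: "f \<noteq> 0" and K: "K \<noteq> 0"
  shows "smult f ([:a0, a1, a2, a3:] * [:a0, a1, a2, a3:]) + monom K 3 \<noteq> 0"
proof
  assume P: "smult f ([:a0, a1, a2, a3:] * [:a0, a1, a2, a3:]) + monom K 3 = 0"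
  have "f * (a0 * a0) = 0"
    using arg_cong[OF P, of "\<lambda>p. coeff p 0"] by (simp add: coeff_mult)
  with f have "a0 = 0"
    by simp
  have "f * (a0 * a2 + a1 * a1 + a2 * a0) = 0"
    using arg_cong[OF P, of "\<lambda>p. coeff p 2"] by (simp add: coeff_mult numeral_eq_Suc atMost_Suc)
  with f \<open>a0 = 0\<close> have "a1 = 0"
    by simp
  have "f * (a0 * a3 + a1 * a2 + a2 * a1 + a3 * a0) + K = 0"
    using arg_cong[OF P, of "\<lambda>p. coeff p 3"] by (simp add: coeff_mult numeral_eq_Suc atMost_Suc)
  with K \<open>a0 = 0\<close> \<open>a1 = 0\<close> show False
    by simp
qed

lemma ex_nonroot_square_plus_cube:
  fixes f K K' a0 a1 a2 a3 b0 b1 b2 b3 :: complex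
  assumes f: "f \<noteq> 0" and K: "K \<noteq> 0" "K' \<noteq> 0"
  shows "\<exists>s. s \<noteq> 0 \<and> f * (a0 + a1 * s + a2 * s^2 + a3 * s^3)^2 + K * s^3 \<noteq> 0
     \<and> f * (b0 + b1 * s + b2 * s^2 + b3 * s^3)^2 + K' * s^3 \<noteq> 0"
proof -
  define P P' where "P = smult f ([:a0, a1, a2, a3:] * [:a0, a1, a2, a3:]) + monom K 3"
    and "P' = smult f ([:b0, b1, b2, b3:] * [:b0, b1, b2, b3:]) + monom K' 3"
  have "[:0, 1:] * P \<noteq> 0" "P' \<noteq> 0"
    unfolding P_def P'_def using square_plus_cube_poly_nonzero[OF f] K by simp_all
  then obtain s where "poly ([:0, 1:] * P) s \<noteq> 0" "poly P' s \<noteq> 0"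
    using ex_common_nonroot by blast
  moreover have "poly P s = f * (a0 + a1 * s + a2 * s^2 + a3 * s^3)^2 + K * s^3"
    "poly P' s = f * (b0 + b1 * s + b2 * s^2 + b3 * s^3)^2 + K' * s^3"
    unfolding P_def P'_def by (simp_all add: poly_monom; algebra)+
  ultimately show ?thesis
    by auto
qed

lemma kernel_polar_nondegenerate:
  assumes H: "hessian L n e0 \<noteq> 0" and f: "polar L n e0 e0 e0 \<noteq> 0"
    and c: "polar L n e0 e0 c1 = 0" "polar L n e0 e0 c2 = 0" "det3 e0 c1 c2 \<noteq> 0"
  shows "polar L n e0 c1 c1 * polar L n e0 c2 c2 - (polar L n e0 c1 c2)^2 \<noteq> 0"
proof -
  define M where "M i j = polar L n e0 (unit_vec i) (unit_vec j)" for i j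
  define P where "P = (\<lambda>i. [e0, c1, c2] ! i)"
  have bil: "polar L n e0 x y = bilin M x y" for x y
    unfolding M_def by (rule polar_eq_bilin)
  have "M 1 0 = M 0 1" "M 2 0 = M 0 2" "M 2 1 = M 1 2"
    by (simp_all add: M_def polar_swap)
  moreover have "mat_det3 M = hessian L n e0"
    unfolding M_def hessian_def ..
  ultimately have "mat_det3 (\<lambda>i j. bilin M (P i) (P j)) = (det3 e0 c1 c2)^2 * hessian L n e0"
    by (subst mat_det3_congruence) (simp_all add: P_def)
  moreover have "mat_det3 (\<lambda>i j. bilin M (P i) (P j))
      = polar L n e0 e0 e0 * (polar L n e0 c1 c1 * polar L n e0 c2 c2 - (polar L n e0 c1 c2)^2)"
    unfolding bil[symmetric] mat_det3_def P_def
    using c by (simp add: polar_swap power2_eq_square algebra_simps)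
  ultimately show ?thesis
    using H f c(3) by auto
qed

text \<open>On the plane spanned by \<open>c1, c2\<close>, where \<open>polar L n e0 e0\<close> vanishes, the quadratic
  form \<open>polar L n e0\<close> is nondegenerate because the Hessian at \<open>e0\<close> is; \<open>n1, n2\<close> span its
  two isotropic lines.\<close>

lemma ex_isotropic_frame:
  assumes f: "polar L n e0 e0 e0 \<noteq> 0" and H: "hessian L n e0 \<noteq> 0"
  shows "\<exists>n1 n2. det3 e0 n1 n2 \<noteq> 0 \<and> polar L n e0 e0 n1 = 0 \<and> polar L n e0 e0 n2 = 0
    \<and> polar L n e0 n1 n1 = 0 \<and> polar L n e0 n2 n2 = 0 \<and> polar L n e0 n1 n2 \<noteq> 0"
proof -
  define g where "g = (polar L n (unit_vec 0) e0 e0, polar L n (unit_vec 1) e0 e0, polar L n (unit_vec 2) e0 e0)"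
  have g: "polar L n e0 e0 x = lin_eval g x" for x
  proof -
    obtain x0 x1 x2 where x: "x = (x0, x1, x2)"
      by (cases x rule: prod_cases3)
    have "polar L n e0 e0 x = polar L n x e0 e0"
      by (metis polar_swap)
    then show ?thesis
      by (simp add: x g_def polar_unit_vec_expand algebra_simps)
  qed
  obtain c1 c2 where c: "lin_eval g c1 = 0" "lin_eval g c2 = 0" "det3 e0 c1 c2 \<noteq> 0"
    using ex_kernel_basis[of g e0] f g by auto
  define p q r where "p = polar L n e0 c1 c1" and "q = polar L n e0 c1 c2" and "r = polar L n e0 c2 c2"
  have c0: "polar L n e0 e0 c1 = 0" "polar L n e0 e0 c2 = 0"
    using c g by simp_all
  then have "p * r - q^2 \<noteq> 0"
    unfolding p_def q_def r_def using kernel_polar_nondegenerate[OF H f _ _ c(3)] by simp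
  then obtain a1 b1 a2 b2 where ab: "a1^2 * p + 2 * a1 * b1 * q + b1^2 * r = 0"
    "a2^2 * p + 2 * a2 * b2 * q + b2^2 * r = 0"
    "a1 * a2 * p + (a1 * b2 + a2 * b1) * q + b1 * b2 * r \<noteq> 0" "a1 * b2 - a2 * b1 \<noteq> 0"
    using ex_isotropic_pair by blast
  define n1 n2 where "n1 = lincomb3 e0 c1 c2 0 a1 b1" and "n2 = lincomb3 e0 c1 c2 0 a2 b2"
  note expand = polar_lincomb3[of L n e0 c1 c2 1 0 0, unfolded lincomb3_1_0_0, folded p_def q_def r_def]
  have "polar L n e0 e0 n1 = 0" "polar L n e0 e0 n2 = 0"
    unfolding n1_def n2_def using polar_lincomb3[of L n e0 c1 c2 1 0 0 1 0 0] c0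
    by (simp_all add: lincomb3_1_0_0)
  moreover have "polar L n e0 n1 n1 = 0" "polar L n e0 n2 n2 = 0"
    "polar L n e0 n1 n2 = a1 * a2 * p + (a1 * b2 + a2 * b1) * q + b1 * b2 * r"
    unfolding n1_def n2_def expand using ab(1,2)
    by (simp_all add: polar_swap power2_eq_square algebra_simps)
  moreover have "det3 e0 n1 n2 \<noteq> 0"
    using det3_lincomb3[of e0 c1 c2 1 0 0 0 a1 b1 0 a2 b2] ab(4) c(3)
    by (simp add: n1_def n2_def lincomb3_1_0_0 mult.commute)
  ultimately show ?thesis
    using ab(3) by metis
qed

lemma polar_isotropic_pencil:
  assumes iso: "polar L n e0 e0 n1 = 0" "polar L n e0 e0 n2 = 0"
    "polar L n e0 n1 n1 = 0" "polar L n e0 n2 n2 = 0"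
  shows "polar L n e0 e0 (lincomb3 e0 n1 n2 0 1 x) = 0"
    "polar L n e0 (lincomb3 e0 n1 n2 0 1 x) (lincomb3 e0 n1 n2 0 1 y) = (x + y) * polar L n e0 n1 n2"
    "polar L n (lincomb3 e0 n1 n2 0 1 x) (lincomb3 e0 n1 n2 0 1 x) (lincomb3 e0 n1 n2 0 1 y) =
      polar L n n1 n1 n1 + (2 * x + y) * polar L n n1 n1 n2 + (x^2 + 2 * x * y) * polar L n n1 n2 n2
      + x^2 * y * polar L n n2 n2 n2"
    "polar L n (lincomb3 e0 n1 n2 0 1 x) (lincomb3 e0 n1 n2 0 1 y) (lincomb3 e0 n1 n2 0 1 y) =
      polar L n n1 n1 n1 + (x + 2 * y) * polar L n n1 n1 n2 + (2 * x * y + y^2) * polar L n n1 n2 n2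
      + x * y^2 * polar L n n2 n2 n2"
  using polar_lincomb3[of L n e0 n1 n2 1 0 0 1 0 0 0 1 x] polar_lincomb3[of L n e0 n1 n2 1 0 0 0 1 x 0 1 y]
    polar_lincomb3[of L n e0 n1 n2 0 1 x 0 1 x 0 1 y] polar_lincomb3[of L n e0 n1 n2 0 1 x 0 1 y 0 1 y]
  by (simp_all add: lincomb3_1_0_0 iso power2_eq_square algebra_simps)

text \<open>For \<open>e1 = n1 + s n2\<close> and \<open>e2 = n1 + 2 s n2\<close> the two discriminants of
  \<open>star_frame_if_discriminants\<close> become \<open>f (f P(s)\<^sup>2 + K s\<^sup>3)\<close> with \<open>K \<noteq> 0\<close>,
  which vanish for only finitely many \<open>s\<close>.\<close>

lemma star_frame_if_isotropic_frame:
  assumes f: "polar L n e0 e0 e0 \<noteq> 0" and dn: "det3 e0 n1 n2 \<noteq> 0"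
    and iso: "polar L n e0 e0 n1 = 0" "polar L n e0 e0 n2 = 0"
      "polar L n e0 n1 n1 = 0" "polar L n e0 n2 n2 = 0"
    and \<kappa>: "polar L n e0 n1 n2 \<noteq> 0"
  shows "\<exists>v0 v1 v2. star_frame L n v0 v1 v2"
proof -
  define f \<kappa> where "f = polar L n e0 e0 e0" and "\<kappa> = polar L n e0 n1 n2"
  define k0 k1 k2 k3 where "k0 = polar L n n1 n1 n1" and "k1 = polar L n n1 n1 n2"
    and "k2 = polar L n n1 n2 n2" and "k3 = polar L n n2 n2 n2"
  obtain s where s: "s \<noteq> 0"
    "f * (k0 + (4 * k1) * s + (5 * k2) * s^2 + (2 * k3) * s^3)^2 + (72 * \<kappa>^3) * s^3 \<noteq> 0"
    "f * (k0 + (5 * k1) * s + (8 * k2) * s^2 + (4 * k3) * s^3)^2 + (144 * \<kappa>^3) * s^3 \<noteq> 0"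
    using ex_nonroot_square_plus_cube[of f "72 * \<kappa>^3" "144 * \<kappa>^3" k0 "4 * k1" "5 * k2" "2 * k3"
        k0 "5 * k1" "8 * k2" "4 * k3"] f \<kappa>
    unfolding f_def \<kappa>_def by auto
  define e1 e2 where "e1 = lincomb3 e0 n1 n2 0 1 s" and "e2 = lincomb3 e0 n1 n2 0 1 (2 * s)"
  note pencil = polar_isotropic_pencil[OF iso, folded \<kappa>_def k0_def k1_def k2_def k3_def]
  have t: "polar L n e0 e0 e1 = 0" "polar L n e0 e0 e2 = 0" "polar L n e0 e1 e1 = 2 * s * \<kappa>"
    "polar L n e0 e2 e2 = 4 * s * \<kappa>" "polar L n e0 e1 e2 = 3 * s * \<kappa>"
    "polar L n e1 e1 e2 = k0 + (4 * k1) * s + (5 * k2) * s^2 + (2 * k3) * s^3"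
    "polar L n e1 e2 e2 = k0 + (5 * k1) * s + (8 * k2) * s^2 + (4 * k3) * s^3"
    unfolding e1_def e2_def pencil by (simp_all add: power2_eq_square power3_eq_cube algebra_simps)
  have "det3 e0 e1 e2 \<noteq> 0"
    using det3_lincomb3[of e0 n1 n2 1 0 0 0 1 s 0 1 "2 * s"] dn s(1)
    by (simp add: e1_def e2_def lincomb3_1_0_0)
  then show ?thesis
  proof (rule star_frame_if_discriminants)
    show "polar L n e0 e0 e0 * polar L n e0 e1 e2 - polar L n e0 e0 e1 * polar L n e0 e0 e2 \<noteq> 0"
      unfolding t f_def[symmetric] using f \<kappa> s(1) by (simp add: f_def \<kappa>_def)
    have "(polar L n e0 e0 e0 * polar L n e1 e1 e2 - polar L n e0 e1 e1 * polar L n e0 e0 e2)^2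
      - 4 * (polar L n e0 e0 e0 * polar L n e0 e1 e2 - polar L n e0 e0 e1 * polar L n e0 e0 e2)
        * (polar L n e0 e0 e1 * polar L n e1 e1 e2 - polar L n e0 e1 e1 * polar L n e0 e1 e2)
      = f * (f * (k0 + (4 * k1) * s + (5 * k2) * s^2 + (2 * k3) * s^3)^2 + (72 * \<kappa>^3) * s^3)"
      unfolding t f_def[symmetric] by algebra
    with f s(2) show "(polar L n e0 e0 e0 * polar L n e1 e1 e2 - polar L n e0 e1 e1 * polar L n e0 e0 e2)^2
      - 4 * (polar L n e0 e0 e0 * polar L n e0 e1 e2 - polar L n e0 e0 e1 * polar L n e0 e0 e2)
        * (polar L n e0 e0 e1 * polar L n e1 e1 e2 - polar L n e0 e1 e1 * polar L n e0 e1 e2) \<noteq> 0"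
      by (simp add: f_def)
    have "(polar L n e0 e0 e0 * polar L n e1 e2 e2 - polar L n e0 e2 e2 * polar L n e0 e0 e1)^2
      - 4 * (polar L n e0 e0 e0 * polar L n e0 e1 e2 - polar L n e0 e0 e1 * polar L n e0 e0 e2)
        * (polar L n e0 e0 e2 * polar L n e1 e2 e2 - polar L n e0 e2 e2 * polar L n e0 e1 e2)
      = f * (f * (k0 + (5 * k1) * s + (8 * k2) * s^2 + (4 * k3) * s^3)^2 + (144 * \<kappa>^3) * s^3)"
      unfolding t f_def[symmetric] by algebra
    with f s(3) show "(polar L n e0 e0 e0 * polar L n e1 e2 e2 - polar L n e0 e2 e2 * polar L n e0 e0 e1)^2
      - 4 * (polar L n e0 e0 e0 * polar L n e0 e1 e2 - polar L n e0 e0 e1 * polar L n e0 e0 e2)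
        * (polar L n e0 e0 e2 * polar L n e1 e2 e2 - polar L n e0 e2 e2 * polar L n e0 e1 e2) \<noteq> 0"
      by (simp add: f_def)
  qed
qed

lemma ex_star_frame_if_hessian_nonzero:
  assumes "hessian L n e \<noteq> 0"
  shows "\<exists>v0 v1 v2. star_frame L n v0 v1 v2"
proof -
  obtain e0 where e0: "polar L n e0 e0 e0 \<noteq> 0" "hessian L n e0 \<noteq> 0"
    using ex_cube_and_hessian_nonzero[OF assms] by blast
  then obtain n1 n2 where "det3 e0 n1 n2 \<noteq> 0" "polar L n e0 e0 n1 = 0" "polar L n e0 e0 n2 = 0"
    "polar L n e0 n1 n1 = 0" "polar L n e0 n2 n2 = 0" "polar L n e0 n1 n2 \<noteq> 0"
    using ex_isotropic_frame by blast
  with e0(1) show ?thesis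
    by (rule star_frame_if_isotropic_frame)
qed

section \<open>The Hessian of a cubic of rank five\<close>

lemma sum_lessThan_5_distinct:
  fixes a b c d m :: nat
  assumes "distinct [a, b, c, d, m]" "\<forall>x\<in>set [a, b, c, d, m]. x < 5"
  shows "(\<Sum>x<5. f x) = f a + f b + f c + f d + f m"
proof -
  have "set [a, b, c, d, m] \<subseteq> {..<5}" "card (set [a, b, c, d, m]) = card {..<5::nat}"
    using assms distinct_card[OF assms(1)] by auto
  then have "set [a, b, c, d, m] = {..<5}"
    by (simp add: card_subset_eq)
  then show ?thesis
    using sum_list_distinct_conv_sum_set[OF assms(1), of f] by (simp add: add.assoc)
qed

lemma cross_ne_0_if_not_sum_of_4_cubes:
  fixes L :: "nat \<Rightarrow> vec3"
  assumes F: "F = (\<lambda>e. \<Sum>i<5. lin_pow (L i) 3 e)" and nd: "\<not> sum_of_cubes F 4"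
    and ij: "i < 5" "j < 5" "i \<noteq> j"
  shows "cross (L i) (L j) \<noteq> (0, 0, 0)"
proof
  assume "cross (L i) (L j) = (0, 0, 0)"
  then obtain k k' c where k: "k < 5" "k' < 5" "k \<noteq> k'" and Lk': "L k' = vsmult c (L k)"
    using proportional_if_cross_eq_0 ij by metis
  define J where "J = {..<5::nat} - {k'}"
  have J: "finite J" "card J \<le> 4" "k \<in> J"
    using k by (auto simp: J_def)
  have "eval_cubic F u = (\<Sum>x\<in>J. (if x = k then 1 + c^3 else 1) * lin_eval (L x) u ^ 3)" for u
  proof -
    have "eval_cubic F u = lin_eval (L k') u ^ 3 + (\<Sum>x\<in>J. lin_eval (L x) u ^ 3)"
      using eval_cubic_sum_of_cubes[OF F] k(2) by (simp add: J_def sum.remove)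
    moreover have "lin_eval (L k') u ^ 3 = (\<Sum>x\<in>J. if x = k then c^3 * lin_eval (L x) u ^ 3 else 0)"
      using J by (simp add: Lk' lin_eval_vsmult power_mult_distrib)
    moreover have "(\<Sum>x\<in>J. lin_eval (L x) u ^ 3) + (\<Sum>x\<in>J. if x = k then c^3 * lin_eval (L x) u ^ 3 else 0)
      = (\<Sum>x\<in>J. (if x = k then 1 + c^3 else 1) * lin_eval (L x) u ^ 3)"
      by (subst sum.distrib[symmetric]) (rule sum.cong; simp add: algebra_simps)
    ultimately show ?thesis
      by (simp add: add.commute)
  qed
  then have "sum_of_cubes F 4"
    using F is_form_sum_lin_pow J by (intro sum_of_cubes_if_eval_cubic) auto
  with nd show False
    by contradiction
qed

lemma mat_det3_rank1_sum:
  "mat_det3 (\<lambda>x y. a * lin_eval P (unit_vec x) * lin_eval P (unit_vec y)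
      + b * lin_eval Q (unit_vec x) * lin_eval Q (unit_vec y)
      + c * lin_eval R (unit_vec x) * lin_eval R (unit_vec y))
    = a * b * c * (det3 P Q R)^2"
proof -
  obtain p0 p1 p2 q0 q1 q2 r0 r1 r2 where PQR: "P = (p0, p1, p2)" "Q = (q0, q1, q2)" "R = (r0, r1, r2)"
    by (metis prod.exhaust)
  show ?thesis
    unfolding PQR by (simp add: mat_det3_def unit_vec_def det3_def) algebra
qed

lemma hessian_at_cross:
  assumes d: "distinct [i, j, k, m, n]" "\<forall>x\<in>set [i, j, k, m, n]. x < 5"
    and nz: "det3 (L i) (L j) (L k) \<noteq> 0" "det3 (L i) (L m) (L n) \<noteq> 0"
      "det3 (L j) (L m) (L n) \<noteq> 0" "det3 (L k) (L m) (L n) \<noteq> 0"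
  shows "hessian L 5 (cross (L m) (L n)) \<noteq> 0"
proof -
  define e where "e = cross (L m) (L n)"
  have le: "lin_eval (L x) e = det3 (L x) (L m) (L n)" for x
    unfolding e_def det3_def ..
  have "lin_eval (L m) e = 0" "lin_eval (L n) e = 0"
    unfolding e_def by (rule lin_eval_cross)+
  then have "(\<lambda>x y. polar L 5 e (unit_vec x) (unit_vec y)) =
    (\<lambda>x y. det3 (L i) (L m) (L n) * lin_eval (L i) (unit_vec x) * lin_eval (L i) (unit_vec y)
      + det3 (L j) (L m) (L n) * lin_eval (L j) (unit_vec x) * lin_eval (L j) (unit_vec y)
      + det3 (L k) (L m) (L n) * lin_eval (L k) (unit_vec x) * lin_eval (L k) (unit_vec y))"
    unfolding polar_def sum_lessThan_5_distinct[OF d] le[symmetric] by (simp add: mult_ac)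
  then have "hessian L 5 e = det3 (L i) (L m) (L n) * det3 (L j) (L m) (L n) * det3 (L k) (L m) (L n)
      * (det3 (L i) (L j) (L k))^2"
    unfolding hessian_def by (simp add: mat_det3_rank1_sum)
  with nz show ?thesis
    unfolding e_def by simp
qed

lemma binary_cubic_sum_of_4_cubes:
  fixes A0 A1 A2 A3 X Y :: complex
  shows "A0 * X^3 + 3 * A1 * X^2 * Y + 3 * A2 * X * Y^2 + A3 * Y^3 = (A0 - A2) * X^3 + (A3 - A1) * Y^3
    + ((A1 + A2) / 2) * (X + Y)^3 + ((A2 - A1) / 2) * (X - Y)^3"
  by (simp add: field_simps) algebra

lemma binary_cubic_eq_cube:
  fixes A0 A1 A2 A3 :: complex
  assumes "A0 * A2 = A1^2" "A1 * A3 = A2^2" "A0 * A3 = A1 * A2"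
  shows "\<exists>\<kappa> \<alpha> \<beta>. \<forall>X Y. A0 * X^3 + 3 * A1 * X^2 * Y + 3 * A2 * X * Y^2 + A3 * Y^3 = \<kappa> * (\<alpha> * X + \<beta> * Y)^3"
proof (cases "A0 = 0")
  case True
  with assms have "A1 = 0" "A2 = 0"
    by simp_all
  with True show ?thesis
    by (intro exI[of _ A3] exI[of _ 0] exI[of _ 1]) simp
next
  case False
  with assms have "A2 = A1^2 / A0" "A3 = A1^3 / A0^2"
    by (simp_all add: field_simps power2_eq_square power3_eq_cube)
  with False show ?thesis
    by (intro exI[of _ A0] exI[of _ 1] exI[of _ "A1 / A0"]) (simp add: field_simps, algebra)
qed

lemma mat_det3_binary_plus_square:
  "mat_det3 (\<lambda>x y. p * lin_eval P (unit_vec x) * lin_eval P (unit_vec y)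
      + q * (lin_eval P (unit_vec x) * lin_eval Q (unit_vec y) + lin_eval Q (unit_vec x) * lin_eval P (unit_vec y))
      + r * lin_eval Q (unit_vec x) * lin_eval Q (unit_vec y)
      + lin_eval R (unit_vec x) * lin_eval R (unit_vec y))
    = (det3 P Q R)^2 * (p * r - q^2)"
proof -
  obtain p0 p1 p2 q0 q1 q2 r0 r1 r2 where PQR: "P = (p0, p1, p2)" "Q = (q0, q1, q2)" "R = (r0, r1, r2)"
    by (metis prod.exhaust)
  show ?thesis
    unfolding PQR by (simp add: mat_det3_def unit_vec_def det3_def) algebra
qed

lemma eval_cubic_ne_sum_of_4_cubes:
  assumes "is_form 3 F" "\<not> sum_of_cubes F 4"
  shows "\<not> (\<forall>u. eval_cubic F u = (\<Sum>j<4. c ! j * lin_eval (B ! j) u ^ 3))"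
  using assms sum_of_cubes_if_eval_cubic[of F "{..<4::nat}" 4 "(!) c" "(!) B"] by auto

text \<open>\<open>hb\<close> is the Hessian of the binary cubic; where it vanishes identically the
  binary cubic is a perfect cube.\<close>

lemma ex_hessian_nonzero_if_binary_plus_cube:
  assumes form: "is_form 3 F" and nd: "\<not> sum_of_cubes F 4" and PQR: "det3 P Q R \<noteq> 0"
    and F_eq: "\<And>u. eval_cubic F u = A0 * lin_eval P u ^ 3 + 3 * A1 * lin_eval P u ^ 2 * lin_eval Q u
      + 3 * A2 * lin_eval P u * lin_eval Q u ^ 2 + A3 * lin_eval Q u ^ 3 + lin_eval R u ^ 3"
    and polar_eq: "\<And>e x y. polar L n e x y =
        (A0 * lin_eval P e + A1 * lin_eval Q e) * lin_eval P x * lin_eval P y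
      + (A1 * lin_eval P e + A2 * lin_eval Q e) * (lin_eval P x * lin_eval Q y + lin_eval Q x * lin_eval P y)
      + (A2 * lin_eval P e + A3 * lin_eval Q e) * lin_eval Q x * lin_eval Q y
      + lin_eval R e * lin_eval R x * lin_eval R y"
  shows "\<exists>e. hessian L n e \<noteq> 0"
proof -
  define hb where "hb s t = (A0 * s + A1 * t) * (A2 * s + A3 * t) - (A1 * s + A2 * t)^2" for s t
  show ?thesis
  proof (cases "hb 1 0 = 0 \<and> hb 0 1 = 0 \<and> hb 1 1 = 0")
    case True
    then have "A0 * A2 = A1^2" "A1 * A3 = A2^2" "A0 * A3 = A1 * A2"
      unfolding hb_def by (auto simp: power2_eq_square algebra_simps)
    then obtain \<kappa> \<alpha> \<beta> where cube: "\<And>X Y. A0 * X^3 + 3 * A1 * X^2 * Y + 3 * A2 * X * Y^2 + A3 * Y^3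
        = \<kappa> * (\<alpha> * X + \<beta> * Y)^3"
      using binary_cubic_eq_cube by metis
    have "eval_cubic F u = (\<Sum>j<4. [\<kappa>, 1, 0, 0] ! j
      * lin_eval ([vadd (vsmult \<alpha> P) (vsmult \<beta> Q), R, R, R] ! j) u ^ 3)" for u
      unfolding F_eq cube by (simp add: numeral_eq_Suc lin_eval_vadd lin_eval_vsmult)
    with eval_cubic_ne_sum_of_4_cubes[OF form nd] show ?thesis
      by blast
  next
    case False
    then obtain s t where "hb s t \<noteq> 0"
      by blast
    moreover obtain e where e: "lin_eval P e = s" "lin_eval Q e = t" "lin_eval R e = 1"
      using ex_lin_eval_eq[OF PQR] by blast
    moreover have "hessian L n e = det3 P Q R ^ 2 * hb s t"
      unfolding hessian_def polar_eq e hb_def by (simp add: mat_det3_binary_plus_square)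
    ultimately have "hessian L n e \<noteq> 0"
      using PQR by simp
    then show ?thesis
      by blast
  qed
qed

lemma ex_hessian_nonzero_if_two_coplanar_triples:
  fixes L :: "nat \<Rightarrow> vec3"
  assumes F: "F = (\<lambda>e. \<Sum>i<5. lin_pow (L i) 3 e)" and nd: "\<not> sum_of_cubes F 4"
    and d: "distinct [a, b, c, d, m]" "\<forall>x\<in>set [a, b, c, d, m]. x < 5"
    and abc: "det3 (L a) (L b) (L c) = 0" and abd: "det3 (L a) (L b) (L d) = 0"
  shows "\<exists>e. hessian L 5 e \<noteq> 0"
proof -
  have form: "is_form 3 F"
    using F is_form_sum_lin_pow by simp
  have "cross (L a) (L b) \<noteq> (0, 0, 0)"
    using d by (intro cross_ne_0_if_not_sum_of_4_cubes[OF F nd]) auto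
  note lin_comb = lin_eval_comb2_if_det3_eq_0[OF this]
  obtain \<alpha>c \<beta>c \<alpha>d \<beta>d where
    Lc: "\<And>u. lin_eval (L c) u = \<alpha>c * lin_eval (L a) u + \<beta>c * lin_eval (L b) u" and
    Ld: "\<And>u. lin_eval (L d) u = \<alpha>d * lin_eval (L a) u + \<beta>d * lin_eval (L b) u"
    using lin_comb[OF abc] lin_comb[OF abd] by metis
  define A0 A1 A2 A3 where "A0 = 1 + \<alpha>c^3 + \<alpha>d^3" and "A1 = \<alpha>c^2 * \<beta>c + \<alpha>d^2 * \<beta>d"
    and "A2 = \<alpha>c * \<beta>c^2 + \<alpha>d * \<beta>d^2" and "A3 = 1 + \<beta>c^3 + \<beta>d^3"
  have F_eq: "eval_cubic F u = A0 * lin_eval (L a) u ^ 3 + 3 * A1 * lin_eval (L a) u ^ 2 * lin_eval (L b) u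
    + 3 * A2 * lin_eval (L a) u * lin_eval (L b) u ^ 2 + A3 * lin_eval (L b) u ^ 3 + lin_eval (L m) u ^ 3"
    for u
    unfolding eval_cubic_sum_of_cubes[OF F] sum_lessThan_5_distinct[OF d] Lc Ld A0_def A1_def A2_def A3_def
    by algebra
  show ?thesis
  proof (cases "det3 (L a) (L b) (L m) = 0")
    case True
    then obtain \<alpha>m \<beta>m where Lm: "\<And>u. lin_eval (L m) u = \<alpha>m * lin_eval (L a) u + \<beta>m * lin_eval (L b) u"
      using lin_comb by metis
    define B0 B1 B2 B3 where "B0 = A0 + \<alpha>m^3" and "B1 = A1 + \<alpha>m^2 * \<beta>m"
      and "B2 = A2 + \<alpha>m * \<beta>m^2" and "B3 = A3 + \<beta>m^3"
    have "eval_cubic F u = B0 * lin_eval (L a) u ^ 3 + 3 * B1 * lin_eval (L a) u ^ 2 * lin_eval (L b) u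
      + 3 * B2 * lin_eval (L a) u * lin_eval (L b) u ^ 2 + B3 * lin_eval (L b) u ^ 3" for u
      unfolding F_eq Lm B0_def B1_def B2_def B3_def by algebra
    then have "eval_cubic F u = (\<Sum>j<4. [B0 - B2, B3 - B1, (B1 + B2) / 2, (B2 - B1) / 2] ! j
      * lin_eval ([L a, L b, vadd (L a) (L b), vadd (L a) (vsmult (-1) (L b))] ! j) u ^ 3)" for u
      unfolding binary_cubic_sum_of_4_cubes
      by (simp add: numeral_eq_Suc lin_eval_vadd lin_eval_vsmult)
    with eval_cubic_ne_sum_of_4_cubes[OF form nd] show ?thesis
      by blast
  next
    case False
    have "polar L 5 e x y =
        (A0 * lin_eval (L a) e + A1 * lin_eval (L b) e) * lin_eval (L a) x * lin_eval (L a) y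
      + (A1 * lin_eval (L a) e + A2 * lin_eval (L b) e)
        * (lin_eval (L a) x * lin_eval (L b) y + lin_eval (L b) x * lin_eval (L a) y)
      + (A2 * lin_eval (L a) e + A3 * lin_eval (L b) e) * lin_eval (L b) x * lin_eval (L b) y
      + lin_eval (L m) e * lin_eval (L m) x * lin_eval (L m) y" for e x y
      unfolding polar_def sum_lessThan_5_distinct[OF d] Lc Ld A0_def A1_def A2_def A3_def by algebra
    with form nd False F_eq show ?thesis
      by (rule ex_hessian_nonzero_if_binary_plus_cube)
  qed
qed

text \<open>If no two \<open>Z\<close>-triples share a pair, there are at most two of them, and each
  excludes four of the ten pairs \<open>{m, n}\<close> (the three it contains and its complement); a pair that
  survives gives the second case.\<close>

lemma five_points_cases:
  fixes Z :: "nat \<Rightarrow> nat \<Rightarrow> nat \<Rightarrow> bool"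
  assumes sym: "\<And>i j k. Z i j k = Z j i k" "\<And>i j k. Z i j k = Z i k j"
  obtains a b c d m where "distinct [a, b, c, d, m]" "\<forall>x\<in>set [a, b, c, d, m]. x < 5" "Z a b c" "Z a b d"
  | i j k m n where "distinct [i, j, k, m, n]" "\<forall>x\<in>set [i, j, k, m, n]. x < 5"
      "\<not> Z i j k" "\<not> Z i m n" "\<not> Z j m n" "\<not> Z k m n"
  using
    that(1)[of 0 1 2 3 4] that(1)[of 0 1 2 4 3] that(1)[of 0 1 3 4 2] that(1)[of 0 2 1 3 4] that(1)[of 0 2 1 4 3]
    that(1)[of 0 2 3 4 1] that(1)[of 0 3 1 2 4] that(1)[of 0 3 1 4 2] that(1)[of 0 3 2 4 1] that(1)[of 0 4 1 2 3]
    that(1)[of 0 4 1 3 2] that(1)[of 0 4 2 3 1] that(1)[of 1 2 0 3 4] that(1)[of 1 2 0 4 3] that(1)[of 1 2 3 4 0]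
    that(1)[of 1 3 0 2 4] that(1)[of 1 3 0 4 2] that(1)[of 1 3 2 4 0] that(1)[of 1 4 0 2 3] that(1)[of 1 4 0 3 2]
    that(1)[of 1 4 2 3 0] that(1)[of 2 3 0 1 4] that(1)[of 2 3 0 4 1] that(1)[of 2 3 1 4 0] that(1)[of 2 4 0 1 3]
    that(1)[of 2 4 0 3 1] that(1)[of 2 4 1 3 0] that(1)[of 3 4 0 1 2] that(1)[of 3 4 0 2 1] that(1)[of 3 4 1 2 0]
    that(2)[of 2 3 4 0 1] that(2)[of 1 3 4 0 2] that(2)[of 1 2 4 0 3] that(2)[of 1 2 3 0 4] that(2)[of 0 3 4 1 2]
    that(2)[of 0 2 4 1 3] that(2)[of 0 2 3 1 4] that(2)[of 0 1 4 2 3] that(2)[of 0 1 3 2 4] that(2)[of 0 1 2 3 4]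
  by (simp (no_asm_use) add: sym) argo

lemma ex_hessian_nonzero_if_not_sum_of_4_cubes:
  fixes L :: "nat \<Rightarrow> vec3"
  assumes F: "F = (\<lambda>e. \<Sum>i<5. lin_pow (L i) 3 e)" and nd: "\<not> sum_of_cubes F 4"
  shows "\<exists>e. hessian L 5 e \<noteq> 0"
proof (rule five_points_cases[of "\<lambda>i j k. det3 (L i) (L j) (L k) = 0"])
  show "(det3 (L i) (L j) (L k) = 0) = (det3 (L j) (L i) (L k) = 0)"
    "(det3 (L i) (L j) (L k) = 0) = (det3 (L i) (L k) (L j) = 0)" for i j k
    using det3_swap[of "L i" "L j" "L k"] det3_swap23[of "L i" "L j" "L k"] by simp_all
next
  fix a b c d m
  assume "distinct [a, b, c, d, m]" "\<forall>x\<in>set [a, b, c, d, m]. x < 5"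
    "det3 (L a) (L b) (L c) = 0" "det3 (L a) (L b) (L d) = 0"
  then show ?thesis
    by (rule ex_hessian_nonzero_if_two_coplanar_triples[OF F nd])
next
  fix i j k m n
  assume "distinct [i, j, k, m, n]" "\<forall>x\<in>set [i, j, k, m, n]. x < 5"
    "det3 (L i) (L j) (L k) \<noteq> 0" "det3 (L i) (L m) (L n) \<noteq> 0"
    "det3 (L j) (L m) (L n) \<noteq> 0" "det3 (L k) (L m) (L n) \<noteq> 0"
  then have "hessian L 5 (cross (L m) (L n)) \<noteq> 0"
    by (rule hessian_at_cross)
  then show ?thesis
    by blast
qed

theorem proposition4p4:
  fixes F :: "mono \<Rightarrow> complex"
  assumes "is_form 3 F"
    and "waring_rank 3 F = 5"
  shows "\<exists>l :: nat \<Rightarrow> vec3. star4_ok l \<and> apolar (star_config l) F"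
proof -
  obtain L :: "nat \<Rightarrow> vec3" where F: "F = (\<lambda>e. \<Sum>i<5. lin_pow (L i) 3 e)"
    using sum_of_cubes_waring_rank[OF assms(1)] assms(2) unfolding sum_of_cubes_def by auto
  moreover have "\<not> sum_of_cubes F 4"
    using not_sum_of_cubes_below_waring_rank assms(2) by simp
  ultimately obtain e where "hessian L 5 e \<noteq> 0"
    using ex_hessian_nonzero_if_not_sum_of_4_cubes by blast
  then obtain v0 v1 v2 where frame: "star_frame L 5 v0 v1 v2"
    using ex_star_frame_if_hessian_nonzero by blast
  then have "star4_ok (star_lines v0 v1 v2)"
    unfolding star_frame_def by (simp add: star4_ok_star_lines)
  moreover have "apolar (star_config (star_lines v0 v1 v2)) F"
    using F frame by (rule apolar_star_config_if_star_frame)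
  ultimately show ?thesis
    by blast
qed

end
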